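(* Let $\{X_n, n\geqslant 1\}$ be a sequence of pairwise positively quadrant dependent (pairwise PQD) random variables stochastically dominated by a random variable $X$ with $\mathbb{E}|X|<\infty$. Let $\{a_n\}$ be a sequence of real constants such that $\sup_{n\geqslant 1} n^{-1}\sum_{k=1}^n a_k^2<\infty$ and \[ \sum_{1\leqslant k<j<\infty} |a_k a_j| \int_j^\infty t^{-3}\, G_{X_k,X_j}(t)\,\mathrm{d}t<\infty . \] Then $\frac{1}{n}\sum_{k=1}^n a_k(X_k-\mathbb{E}X_k)\to 0$ almost surely.
   Context: A sequence $\{X_n, n\geqslant1\}$ of random variables is pairwise PQD if $\mathbb{P}\{X_k\leqslant x_k, X_j\leqslant x_j\}-\mathbb{P}\{X_k\leqslant x_k\}\mathbb{P}\{X_j\leqslant x_j\}\geqslant 0$ for all reals $x_k,x_j$ and all positive integers $k\neq j$. A sequence $\{X_n\}$ is stochastically dominated by a random variable $X$ if there is a constant $C>0$ with $\sup_{n\geqslant1}\mathbb{P}\{|X_n|>t\}\leqslant C\,\mathbb{P}\{|X|>t\}$ for all $t>0$. For random variables $X,Y$ and $t>0$, let $g_t(s)=\max(\min(s,t),-t)$, $\Delta_{X,Y}(x,y)=\mathbb{P}\{X\leqslant x,Y\leqslant y\}-\mathbb{P}\{X\leqslant x\}\mathbb{P}\{Y\leqslant y\}$, and $G_{X,Y}(t)=\mathrm{Cov}(g_t(X),g_t(Y))=\int_{-t}^t\int_{-t}^t \Delta_{X,Y}(x,y)\,\mathrm{d}x\,\mathrm{d}y$. *)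

theory Defs
  imports "HOL-Probability.Probability"
begin

definition trunc_at :: "real \<Rightarrow> real \<Rightarrow> real" where
  "trunc_at t s = max (min s t) (- t)"

definition pairwise_PQD :: "'a measure \<Rightarrow> (nat \<Rightarrow> 'a \<Rightarrow> real) \<Rightarrow> bool" where
  "pairwise_PQD M X \<longleftrightarrow>
     (\<forall>k j (x::real) (y::real). 1 \<le> k \<longrightarrow> 1 \<le> j \<longrightarrow> k \<noteq> j \<longrightarrow>
        measure M {\<omega>\<in>space M. X k \<omega> \<le> x \<and> X j \<omega> \<le> y}
          - measure M {\<omega>\<in>space M. X k \<omega> \<le> x} * measure M {\<omega>\<in>space M. X j \<omega> \<le> y} \<ge> 0)"

definition stoch_dominated :: "'a measure \<Rightarrow> (nat \<Rightarrow> 'a \<Rightarrow> real) \<Rightarrow> ('a \<Rightarrow> real) \<Rightarrow> bool" where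
  "stoch_dominated M X Y \<longleftrightarrow>
     (\<exists>C>0. \<forall>n\<ge>1. \<forall>t>0.
        measure M {\<omega>\<in>space M. \<bar>X n \<omega>\<bar> > t} \<le> C * measure M {\<omega>\<in>space M. \<bar>Y \<omega>\<bar> > t})"

definition Gcov :: "'a measure \<Rightarrow> ('a \<Rightarrow> real) \<Rightarrow> ('a \<Rightarrow> real) \<Rightarrow> real \<Rightarrow> real" where
  "Gcov M X Y t =
     (\<integral>\<omega>. trunc_at t (X \<omega>) * trunc_at t (Y \<omega>) \<partial>M)
     - (\<integral>\<omega>. trunc_at t (X \<omega>) \<partial>M) * (\<integral>\<omega>. trunc_at t (Y \<omega>) \<partial>M)"

end

theory Submission
  imports Defs
begin

text \<open>
  Etemadi's method. Splitting \<open>a\<^sub>k\<close> and \<open>X\<^sub>k\<close> into positive and negative parts reduces the claim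
  to nonnegative weights \<open>b\<^sub>k \<le> |a\<^sub>k|\<close> and nonnegative summands \<open>Z\<^sub>k = (\<plusminus>X\<^sub>k)\<^sup>+\<close>, which are
  still dominated by \<open>|Y|\<close>. Positive quadrant dependence makes the covariance of nondecreasing
  truncations of \<open>X\<^sub>k\<close> and \<open>X\<^sub>j\<close> nonnegative (Hoeffding's identity); consequently \<open>G(t)\<close> is
  nondecreasing and bounds the covariance of \<open>min(Z\<^sub>k, k)\<close> and \<open>min(Z\<^sub>j, j)\<close> by \<open>G(j)\<close> for \<open>k < j\<close>.

  Truncating \<open>Z\<^sub>k\<close> at level \<open>k\<close> changes the averages only negligibly, because \<open>E|Y| < \<infinity>\<close>.
  For the truncated centred sums, Chebyshev's inequality along \<open>n\<^sub>m = \<lfloor>\<alpha>\<^sup>m\<rfloor>\<close> gives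
  probabilities summable in \<open>m\<close>: the diagonal part of the variance by \<open>E|Y| < \<infinity>\<close>, the
  off-diagonal part by \<open>G(j)/j\<^sup>2 \<le> 8 \<integral>\<^sub>j\<^sup>\<infinity> G(t)/t\<^sup>3 dt\<close> and the summability hypothesis.
  Borel--Cantelli yields convergence along \<open>n\<^sub>m\<close>; since the partial sums of nonnegative terms
  are monotone, this extends to all \<open>n\<close> as \<open>\<alpha> \<down> 1\<close>.
\<close>

section \<open>Truncation, covariance and positive quadrant dependence\<close>

definition clip :: "real \<Rightarrow> real \<Rightarrow> real \<Rightarrow> real" where
  "clip a b x = max (min x b) a"

lemma clip_measurable[measurable]: "clip a b \<in> borel_measurable borel"
  unfolding clip_def by measurable

lemma abs_clip_le: "\<bar>clip a b x\<bar> \<le> \<bar>a\<bar> + \<bar>b\<bar>"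
  unfolding clip_def by auto

lemma trunc_at_eq_clip: "trunc_at t = clip (-t) t"
  by (simp add: fun_eq_iff trunc_at_def clip_def)

lemma integral_indicator_less_eq_clip:
  assumes "a \<le> b"
  shows "(\<integral>u. indicator {a..b} u * (if u < x then v else 0) \<partial>lborel) = v * (clip a b x - a)"
proof -
  consider "x \<le> a" | "a < x" "x \<le> b" | "b < x" by linarith
  then show ?thesis
  proof cases
    case 1
    then have "(\<lambda>u. indicator {a..b} u * (if u < x then v else 0)) = (\<lambda>u. 0::real)"
      by (auto simp: fun_eq_iff indicator_def)
    then show ?thesis using 1 assms by (simp add: clip_def)
  next
    case 2
    then have "(\<lambda>u. indicator {a..b} u * (if u < x then v else 0)) = (\<lambda>u. v * indicator {a..<x} u)"
      by (auto simp: fun_eq_iff indicator_def)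
    then show ?thesis using 2 by (simp add: clip_def)
  next
    case 3
    then have "(\<lambda>u. indicator {a..b} u * (if u < x then v else 0)) = (\<lambda>u. v * indicator {a..b} u)"
      by (auto simp: fun_eq_iff indicator_def)
    then show ?thesis using 3 assms by (simp add: clip_def)
  qed
qed

definition covariance :: "'a measure \<Rightarrow> ('a \<Rightarrow> real) \<Rightarrow> ('a \<Rightarrow> real) \<Rightarrow> real" where
  "covariance M U V = (\<integral>\<omega>. U \<omega> * V \<omega> \<partial>M) - (\<integral>\<omega>. U \<omega> \<partial>M) * (\<integral>\<omega>. V \<omega> \<partial>M)"

lemma covariance_commute: "covariance M U V = covariance M V U"
  unfolding covariance_def by (simp add: mult.commute)

lemma Gcov_eq_covariance:
  "Gcov M X1 X2 t = covariance M (\<lambda>\<omega>. clip (-t) t (X1 \<omega>)) (\<lambda>\<omega>. clip (-t) t (X2 \<omega>))"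
  unfolding Gcov_def covariance_def trunc_at_eq_clip ..

definition PQD :: "'a measure \<Rightarrow> ('a \<Rightarrow> real) \<Rightarrow> ('a \<Rightarrow> real) \<Rightarrow> bool" where
  "PQD M X1 X2 \<longleftrightarrow> (\<forall>x y.
     measure M {\<omega>\<in>space M. X1 \<omega> \<le> x} * measure M {\<omega>\<in>space M. X2 \<omega> \<le> y}
       \<le> measure M {\<omega>\<in>space M. X1 \<omega> \<le> x \<and> X2 \<omega> \<le> y})"

lemma pairwise_PQD_imp_PQD:
  "pairwise_PQD M X \<Longrightarrow> 1 \<le> k \<Longrightarrow> 1 \<le> j \<Longrightarrow> k \<noteq> j \<Longrightarrow> PQD M (X k) (X j)"
  unfolding pairwise_PQD_def PQD_def by fastforce

context prob_space
begin

lemma covariance_uminus: "covariance M (\<lambda>\<omega>. - U \<omega>) (\<lambda>\<omega>. - V \<omega>) = covariance M U V"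
  unfolding covariance_def by simp

lemma covariance_const_left: "covariance M (\<lambda>_. c) V = 0"
  unfolding covariance_def by (simp add: prob_space)

lemma covariance_add_const:
  assumes "integrable M U" "integrable M V" "integrable M (\<lambda>\<omega>. U \<omega> * V \<omega>)"
  shows "covariance M (\<lambda>\<omega>. U \<omega> + c) (\<lambda>\<omega>. V \<omega> + d) = covariance M U V"
proof -
  have "(\<lambda>\<omega>. (U \<omega> + c) * (V \<omega> + d)) = (\<lambda>\<omega>. U \<omega> * V \<omega> + d * U \<omega> + c * V \<omega> + c * d)"
    by (auto simp: fun_eq_iff algebra_simps)
  then show ?thesis
    unfolding covariance_def using assms by (simp add: prob_space algebra_simps)
qed

lemma integrable_mult_bounded:
  fixes U V :: "'a \<Rightarrow> real"
  assumes "U \<in> borel_measurable M" "V \<in> borel_measurable M"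
    and "\<And>\<omega>. \<omega> \<in> space M \<Longrightarrow> \<bar>U \<omega>\<bar> \<le> K" "\<And>\<omega>. \<omega> \<in> space M \<Longrightarrow> \<bar>V \<omega>\<bar> \<le> L"
  shows "integrable M (\<lambda>\<omega>. U \<omega> * V \<omega>)"
proof (rule integrable_const_bound[where B="K * L"])
  show "AE \<omega> in M. norm (U \<omega> * V \<omega>) \<le> K * L"
    using assms by (auto simp: abs_mult intro!: mult_mono')
qed (use assms in measurable)

lemma integrable_clip:
  "X \<in> borel_measurable M \<Longrightarrow> integrable M (\<lambda>\<omega>. clip a b (X \<omega>))"
  by (rule integrable_const_bound[where B="\<bar>a\<bar> + \<bar>b\<bar>"]) (auto simp: abs_clip_le)

lemma integrable_clip_mult_clip:
  "X1 \<in> borel_measurable M \<Longrightarrow> X2 \<in> borel_measurable M \<Longrightarrow>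
     integrable M (\<lambda>\<omega>. clip a b (X1 \<omega>) * clip c d (X2 \<omega>))"
  by (rule integrable_mult_bounded[OF _ _ abs_clip_le abs_clip_le]) auto

lemma covariance_clip_sum3_clip_sum3:
  fixes X1 X2 :: "'a \<Rightarrow> real"
  assumes "X1 \<in> borel_measurable M" "X2 \<in> borel_measurable M"
  shows "covariance M (\<lambda>\<omega>. clip a1 b1 (X1 \<omega>) + clip a2 b2 (X1 \<omega>) + clip a3 b3 (X1 \<omega>))
                      (\<lambda>\<omega>. clip c1 d1 (X2 \<omega>) + clip c2 d2 (X2 \<omega>) + clip c3 d3 (X2 \<omega>)) =
    covariance M (\<lambda>\<omega>. clip a1 b1 (X1 \<omega>)) (\<lambda>\<omega>. clip c1 d1 (X2 \<omega>)) +
    covariance M (\<lambda>\<omega>. clip a1 b1 (X1 \<omega>)) (\<lambda>\<omega>. clip c2 d2 (X2 \<omega>)) +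
    covariance M (\<lambda>\<omega>. clip a1 b1 (X1 \<omega>)) (\<lambda>\<omega>. clip c3 d3 (X2 \<omega>)) +
    covariance M (\<lambda>\<omega>. clip a2 b2 (X1 \<omega>)) (\<lambda>\<omega>. clip c1 d1 (X2 \<omega>)) +
    covariance M (\<lambda>\<omega>. clip a2 b2 (X1 \<omega>)) (\<lambda>\<omega>. clip c2 d2 (X2 \<omega>)) +
    covariance M (\<lambda>\<omega>. clip a2 b2 (X1 \<omega>)) (\<lambda>\<omega>. clip c3 d3 (X2 \<omega>)) +
    covariance M (\<lambda>\<omega>. clip a3 b3 (X1 \<omega>)) (\<lambda>\<omega>. clip c1 d1 (X2 \<omega>)) +
    covariance M (\<lambda>\<omega>. clip a3 b3 (X1 \<omega>)) (\<lambda>\<omega>. clip c2 d2 (X2 \<omega>)) +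
    covariance M (\<lambda>\<omega>. clip a3 b3 (X1 \<omega>)) (\<lambda>\<omega>. clip c3 d3 (X2 \<omega>))"
  (is "covariance M (\<lambda>\<omega>. ?U1 \<omega> + ?U2 \<omega> + ?U3 \<omega>) (\<lambda>\<omega>. ?V1 \<omega> + ?V2 \<omega> + ?V3 \<omega>) = _")
proof -
  note single = integrable_clip[OF assms(1)] integrable_clip[OF assms(2)]
  note products = integrable_clip_mult_clip[OF assms]
  have "(\<lambda>\<omega>. (?U1 \<omega> + ?U2 \<omega> + ?U3 \<omega>) * (?V1 \<omega> + ?V2 \<omega> + ?V3 \<omega>)) =
    (\<lambda>\<omega>. ?U1 \<omega> * ?V1 \<omega> + ?U1 \<omega> * ?V2 \<omega> + ?U1 \<omega> * ?V3 \<omega> + ?U2 \<omega> * ?V1 \<omega> + ?U2 \<omega> * ?V2 \<omega>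
       + ?U2 \<omega> * ?V3 \<omega> + ?U3 \<omega> * ?V1 \<omega> + ?U3 \<omega> * ?V2 \<omega> + ?U3 \<omega> * ?V3 \<omega>)"
    by (auto simp: fun_eq_iff algebra_simps)
  then show ?thesis
    unfolding covariance_def using single products
    by (simp only: Bochner_Integration.integral_add Bochner_Integration.integrable_add
        distrib_left distrib_right)
qed

lemma integrable_clip_kernel:
  fixes X V :: "'a \<Rightarrow> real"
  assumes [measurable]: "X \<in> borel_measurable M" "V \<in> borel_measurable M"
    and bounded: "\<And>\<omega>. \<omega> \<in> space M \<Longrightarrow> \<bar>V \<omega>\<bar> \<le> K"
  shows "integrable (M \<Otimes>\<^sub>M lborel) (\<lambda>(\<omega>, u). indicator {a..b} u * (if u < X \<omega> then V \<omega> else 0))"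
proof (rule Bochner_Integration.integrable_bound)
  show "integrable (M \<Otimes>\<^sub>M lborel) (\<lambda>x. K * indicator (space M \<times> {a..b}) x)"
  proof (intro integrable_mult_right integrable_real_indicator)
    show "space M \<times> {a..b} \<in> sets (M \<Otimes>\<^sub>M lborel)" by measurable
    have "emeasure (M \<Otimes>\<^sub>M lborel) (space M \<times> {a..b}) = emeasure M (space M) * emeasure lborel {a..b}"
      by (rule lborel.emeasure_pair_measure_Times) auto
    then show "emeasure (M \<Otimes>\<^sub>M lborel) (space M \<times> {a..b}) < \<infinity>"
      by (simp add: emeasure_space_1 ennreal_mult_less_top emeasure_lborel_Icc_eq)
  qed
  show "AE x in M \<Otimes>\<^sub>M lborel. norm ((\<lambda>(\<omega>, u). indicator {a..b} u * (if u < X \<omega> then V \<omega> else 0)) x)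
          \<le> norm (K * indicator (space M \<times> {a..b}) x)"
  proof (rule AE_I2)
    fix x :: "'a \<times> real" assume "x \<in> space (M \<Otimes>\<^sub>M lborel)"
    then obtain \<omega> u where x: "x = (\<omega>, u)" "\<omega> \<in> space M" by (auto simp: space_pair_measure)
    then show "norm ((\<lambda>(\<omega>, u). indicator {a..b} u * (if u < X \<omega> then V \<omega> else 0)) x)
          \<le> norm (K * indicator (space M \<times> {a..b}) x)"
      using bounded[OF x(2)] by (auto simp: indicator_def)
  qed
qed measurable

text \<open>Hoeffding's identity for a truncation: \<open>clip a b x = a + \<integral>\<^sub>a\<^sup>b [u < x] du\<close>, and Fubini.\<close>

lemma expectation_clip_mult:
  fixes X V :: "'a \<Rightarrow> real"
  assumes [measurable]: "X \<in> borel_measurable M" "V \<in> borel_measurable M"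
    and bounded: "\<And>\<omega>. \<omega> \<in> space M \<Longrightarrow> \<bar>V \<omega>\<bar> \<le> K" and "a \<le> b"
  shows "integrable lborel (\<lambda>u. indicator {a..b} u * expectation (\<lambda>\<omega>. if u < X \<omega> then V \<omega> else 0))"
    and "expectation (\<lambda>\<omega>. clip a b (X \<omega>) * V \<omega>) = a * expectation V +
          (\<integral>u. indicator {a..b} u * expectation (\<lambda>\<omega>. if u < X \<omega> then V \<omega> else 0) \<partial>lborel)"
proof -
  interpret pair_sigma_finite M lborel
    by (simp add: pair_sigma_finite_def lborel.sigma_finite_measure_axioms sigma_finite_measure_axioms)
  define f where "f \<omega> u = indicator {a..b} u * (if u < X \<omega> then V \<omega> else (0::real))" for \<omega> u
  have f: "integrable (M \<Otimes>\<^sub>M lborel) (case_prod f)"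
    unfolding f_def by (rule integrable_clip_kernel[OF assms(1,2) bounded])
  have inner: "(\<integral>\<omega>. f \<omega> u \<partial>M) = indicator {a..b} u * expectation (\<lambda>\<omega>. if u < X \<omega> then V \<omega> else 0)" for u
    unfolding f_def by simp
  show "integrable lborel (\<lambda>u. indicator {a..b} u * expectation (\<lambda>\<omega>. if u < X \<omega> then V \<omega> else 0))"
    using integrable_snd[OF f] unfolding inner .
  have "integrable M V"
    by (rule integrable_const_bound[where B=K]) (use bounded in auto)
  moreover have "integrable M (\<lambda>\<omega>. clip a b (X \<omega>) * V \<omega>)"
    by (rule integrable_mult_bounded[OF _ _ abs_clip_le bounded]) auto
  moreover have "(\<integral>u. (\<integral>\<omega>. f \<omega> u \<partial>M) \<partial>lborel) = (\<integral>\<omega>. (\<integral>u. f \<omega> u \<partial>lborel) \<partial>M)"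
    by (rule Fubini_integral[OF f])
  moreover have "(\<integral>u. f \<omega> u \<partial>lborel) = clip a b (X \<omega>) * V \<omega> - a * V \<omega>" for \<omega>
    unfolding f_def integral_indicator_less_eq_clip[OF \<open>a \<le> b\<close>] by (simp add: algebra_simps)
  ultimately show "expectation (\<lambda>\<omega>. clip a b (X \<omega>) * V \<omega>) = a * expectation V +
          (\<integral>u. indicator {a..b} u * expectation (\<lambda>\<omega>. if u < X \<omega> then V \<omega> else 0) \<partial>lborel)"
    unfolding inner by simp
qed

lemma covariance_clip_eq_integral:
  fixes X V :: "'a \<Rightarrow> real"
  assumes [measurable]: "X \<in> borel_measurable M" "V \<in> borel_measurable M"
    and bounded: "\<And>\<omega>. \<omega> \<in> space M \<Longrightarrow> \<bar>V \<omega>\<bar> \<le> K" and "a \<le> b"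
  shows "covariance M (\<lambda>\<omega>. clip a b (X \<omega>)) V =
           (\<integral>u. indicator {a..b} u * covariance M (\<lambda>\<omega>. if u < X \<omega> then 1 else 0) V \<partial>lborel)"
proof -
  let ?h = "\<lambda>u. indicator {a..b} u * expectation (\<lambda>\<omega>. if u < X \<omega> then V \<omega> else 0)"
  let ?h1 = "\<lambda>u. indicator {a..b} u * expectation (\<lambda>\<omega>. if u < X \<omega> then 1 else 0::real)"
  have one: "integrable lborel ?h1" "expectation (\<lambda>\<omega>. clip a b (X \<omega>)) = a + integral\<^sup>L lborel ?h1"
    using expectation_clip_mult[where V="\<lambda>_. 1" and K=1, OF assms(1) _ _ \<open>a \<le> b\<close>]
    by (simp_all add: prob_space)
  have "covariance M (\<lambda>\<omega>. clip a b (X \<omega>)) V = integral\<^sup>L lborel ?h - expectation V * integral\<^sup>L lborel ?h1"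
    using expectation_clip_mult(2)[OF assms] one(2) by (simp add: covariance_def algebra_simps)
  also have "\<dots> = (\<integral>u. ?h u - expectation V * ?h1 u \<partial>lborel)"
    using expectation_clip_mult(1)[OF assms] one(1) by simp
  also have "\<dots> = (\<integral>u. indicator {a..b} u * covariance M (\<lambda>\<omega>. if u < X \<omega> then 1 else 0) V \<partial>lborel)"
  proof (rule Bochner_Integration.integral_cong)
    fix u
    have "expectation (\<lambda>\<omega>. (if u < X \<omega> then 1 else 0) * V \<omega>) = expectation (\<lambda>\<omega>. if u < X \<omega> then V \<omega> else 0)"
      by (rule Bochner_Integration.integral_cong) auto
    then show "?h u - expectation V * ?h1 u =
        indicator {a..b} u * covariance M (\<lambda>\<omega>. if u < X \<omega> then 1 else 0) V"
      unfolding covariance_def by (simp add: algebra_simps)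
  qed simp
  finally show ?thesis .
qed

lemma expectation_indicator_eq_prob:
  assumes "{\<omega>\<in>space M. P \<omega>} \<in> events"
  shows "expectation (\<lambda>\<omega>. if P \<omega> then 1 else 0::real) = prob {\<omega>\<in>space M. P \<omega>}"
proof -
  have "expectation (\<lambda>\<omega>. if P \<omega> then 1 else 0::real) = expectation (indicator {\<omega>\<in>space M. P \<omega>})"
    by (rule Bochner_Integration.integral_cong) (auto simp: indicator_def)
  then show ?thesis using assms by (simp add: Int_absorb2)
qed

lemma PQD_upper_orthant:
  fixes X1 X2 :: "'a \<Rightarrow> real"
  assumes "PQD M X1 X2" and [measurable]: "X1 \<in> borel_measurable M" "X2 \<in> borel_measurable M"
  shows "prob {\<omega>\<in>space M. u < X1 \<omega>} * prob {\<omega>\<in>space M. v < X2 \<omega>}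
           \<le> prob {\<omega>\<in>space M. u < X1 \<omega> \<and> v < X2 \<omega>}"
proof -
  define A where "A = {\<omega>\<in>space M. X1 \<omega> \<le> u}"
  define B where "B = {\<omega>\<in>space M. X2 \<omega> \<le> v}"
  have [measurable]: "A \<in> events" "B \<in> events" unfolding A_def B_def by measurable
  have "{\<omega>\<in>space M. u < X1 \<omega> \<and> v < X2 \<omega>} = space M - (A \<union> B)"
    "{\<omega>\<in>space M. u < X1 \<omega>} = space M - A" "{\<omega>\<in>space M. v < X2 \<omega>} = space M - B"
    unfolding A_def B_def by auto
  moreover have "prob (A \<union> B) = prob A + prob B - prob (A \<inter> B)"
    by (rule measure_Un3) (auto simp: fmeasurable_def less_top[symmetric])
  moreover have "prob A * prob B \<le> prob {\<omega>\<in>space M. X1 \<omega> \<le> u \<and> X2 \<omega> \<le> v}"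
    using assms(1) unfolding PQD_def A_def B_def by blast
  moreover have "{\<omega>\<in>space M. X1 \<omega> \<le> u \<and> X2 \<omega> \<le> v} = A \<inter> B"
    unfolding A_def B_def by auto
  ultimately show ?thesis
    by (simp add: prob_compl algebra_simps)
qed

lemma PQD_covariance_indicator_nonneg:
  fixes X1 X2 :: "'a \<Rightarrow> real"
  assumes "PQD M X1 X2" and [measurable]: "X1 \<in> borel_measurable M" "X2 \<in> borel_measurable M"
  shows "0 \<le> covariance M (\<lambda>\<omega>. if u < X1 \<omega> then 1 else 0) (\<lambda>\<omega>. if v < X2 \<omega> then 1 else 0)"
proof -
  have "(\<lambda>\<omega>. (if u < X1 \<omega> then 1 else 0) * (if v < X2 \<omega> then 1 else 0::real)) =
      (\<lambda>\<omega>. if u < X1 \<omega> \<and> v < X2 \<omega> then 1 else 0)"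
    by auto
  then show ?thesis
    using PQD_upper_orthant[OF assms, of u v]
    by (simp add: covariance_def expectation_indicator_eq_prob)
qed

lemma PQD_covariance_clip_nonneg:
  fixes X1 X2 :: "'a \<Rightarrow> real"
  assumes PQD: "PQD M X1 X2" and [measurable]: "X1 \<in> borel_measurable M" "X2 \<in> borel_measurable M"
    and "a \<le> b" "c \<le> d"
  shows "0 \<le> covariance M (\<lambda>\<omega>. clip a b (X1 \<omega>)) (\<lambda>\<omega>. clip c d (X2 \<omega>))"
proof -
  have "0 \<le> covariance M (\<lambda>\<omega>. if u < X1 \<omega> then 1 else 0) (\<lambda>\<omega>. clip c d (X2 \<omega>))" for u
  proof -
    have "covariance M (\<lambda>\<omega>. clip c d (X2 \<omega>)) (\<lambda>\<omega>. if u < X1 \<omega> then 1 else 0) =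
        (\<integral>v. indicator {c..d} v * covariance M (\<lambda>\<omega>. if v < X2 \<omega> then 1 else 0)
                                         (\<lambda>\<omega>. if u < X1 \<omega> then 1 else 0) \<partial>lborel)"
      by (rule covariance_clip_eq_integral[where K=1]) (use \<open>c \<le> d\<close> in auto)
    moreover have "0 \<le> covariance M (\<lambda>\<omega>. if v < X2 \<omega> then 1 else 0) (\<lambda>\<omega>. if u < X1 \<omega> then 1 else 0)" for v
      unfolding covariance_commute[of M "\<lambda>\<omega>. if v < X2 \<omega> then 1 else 0"]
      by (rule PQD_covariance_indicator_nonneg[OF assms(1-3)])
    ultimately show ?thesis
      by (auto simp: covariance_commute intro!: integral_nonneg_AE)
  qed
  moreover have "covariance M (\<lambda>\<omega>. clip a b (X1 \<omega>)) (\<lambda>\<omega>. clip c d (X2 \<omega>)) =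
      (\<integral>u. indicator {a..b} u * covariance M (\<lambda>\<omega>. if u < X1 \<omega> then 1 else 0)
                                       (\<lambda>\<omega>. clip c d (X2 \<omega>)) \<partial>lborel)"
    by (rule covariance_clip_eq_integral[OF _ _ abs_clip_le]) (use \<open>a \<le> b\<close> in auto)
  ultimately show ?thesis
    by (auto intro!: integral_nonneg_AE)
qed

end

section \<open>The truncated covariance \<open>Gcov\<close>\<close>

lemma clip_symmetric_split:
  "0 \<le> s \<Longrightarrow> s \<le> t \<Longrightarrow> clip (-t) t x = clip (-s) s x + clip s t x + clip (-t) (-s) x + 0"
  unfolding clip_def by auto

lemma clip_symmetric_split_nonneg:
  "0 \<le> k \<Longrightarrow> k \<le> t \<Longrightarrow> clip (-t) t x = clip 0 k x + clip k t x + clip (-t) 0 x + - k"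
  unfolding clip_def by auto

lemma clip_symmetric_split_nonpos:
  "0 \<le> k \<Longrightarrow> k \<le> t \<Longrightarrow> clip (-t) t x = clip (-k) 0 x + clip (-t) (-k) x + clip 0 t x + k"
  unfolding clip_def by auto

lemma set_integrable_inverse_sq:
  fixes a :: real
  assumes "0 < a"
  shows "set_integrable lborel {a..} (\<lambda>x. 1 / x\<^sup>2)"
proof -
  have "((\<lambda>x. 1 / x ^ 2) has_integral 1 / (real (2 - 1) * a ^ (2 - 1))) {a..}"
    by (rule has_integral_inverse_power_to_inf) (use assms in auto)
  then have "(\<lambda>x. 1 / x\<^sup>2) absolutely_integrable_on {a..}"
    by (intro nonnegative_absolutely_integrable_1) (auto simp: integrable_on_def)
  then show ?thesis
    unfolding set_integrable_def by (subst (asm) integrable_completion) measurable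
qed

context prob_space
begin

lemma PQD_covariance_clip_le_sum:
  fixes X1 X2 :: "'a \<Rightarrow> real"
  assumes PQD: "PQD M X1 X2" and [measurable]: "X1 \<in> borel_measurable M" "X2 \<in> borel_measurable M"
    and le: "a1 \<le> b1" "a2 \<le> b2" "a3 \<le> b3" "c1 \<le> d1" "c2 \<le> d2" "c3 \<le> d3"
  shows "covariance M (\<lambda>\<omega>. clip a1 b1 (X1 \<omega>)) (\<lambda>\<omega>. clip c1 d1 (X2 \<omega>)) \<le>
    covariance M (\<lambda>\<omega>. clip a1 b1 (X1 \<omega>) + clip a2 b2 (X1 \<omega>) + clip a3 b3 (X1 \<omega>) + c)
                 (\<lambda>\<omega>. clip c1 d1 (X2 \<omega>) + clip c2 d2 (X2 \<omega>) + clip c3 d3 (X2 \<omega>) + d)"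
proof -
  let ?U = "\<lambda>\<omega>. clip a1 b1 (X1 \<omega>) + clip a2 b2 (X1 \<omega>) + clip a3 b3 (X1 \<omega>)"
  let ?V = "\<lambda>\<omega>. clip c1 d1 (X2 \<omega>) + clip c2 d2 (X2 \<omega>) + clip c3 d3 (X2 \<omega>)"
  have U: "\<And>\<omega>. \<omega> \<in> space M \<Longrightarrow> \<bar>?U \<omega>\<bar> \<le> (\<bar>a1\<bar> + \<bar>b1\<bar>) + (\<bar>a2\<bar> + \<bar>b2\<bar>) + (\<bar>a3\<bar> + \<bar>b3\<bar>)"
    and V: "\<And>\<omega>. \<omega> \<in> space M \<Longrightarrow> \<bar>?V \<omega>\<bar> \<le> (\<bar>c1\<bar> + \<bar>d1\<bar>) + (\<bar>c2\<bar> + \<bar>d2\<bar>) + (\<bar>c3\<bar> + \<bar>d3\<bar>)"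
    by (intro order_trans[OF abs_triangle_ineq] add_mono abs_clip_le)+
  have "integrable M (\<lambda>\<omega>. ?U \<omega> * ?V \<omega>)"
    by (rule integrable_mult_bounded[OF _ _ U V]) auto
  then have "covariance M (\<lambda>\<omega>. ?U \<omega> + c) (\<lambda>\<omega>. ?V \<omega> + d) = covariance M ?U ?V"
    by (intro covariance_add_const Bochner_Integration.integrable_add integrable_clip) auto
  also note covariance_clip_sum3_clip_sum3[OF assms(2,3), of a1 b1 a2 b2 a3 b3 c1 d1 c2 d2 c3 d3]
  moreover note nonneg = PQD_covariance_clip_nonneg[OF assms(1-3)]
  ultimately show ?thesis
    using nonneg[OF le(1) le(5)] nonneg[OF le(1) le(6)] nonneg[OF le(2) le(4)] nonneg[OF le(2) le(5)]
      nonneg[OF le(2) le(6)] nonneg[OF le(3) le(4)] nonneg[OF le(3) le(5)] nonneg[OF le(3) le(6)]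
    by linarith
qed

lemma Gcov_nonpos_arg: "t < 0 \<Longrightarrow> Gcov M X1 X2 t = 0"
proof -
  assume "t < 0"
  then have "clip (-t) t x = -t" for x unfolding clip_def by auto
  then show ?thesis unfolding Gcov_eq_covariance by (simp add: covariance_const_left)
qed

lemma Gcov_nonneg:
  assumes "PQD M X1 X2" "X1 \<in> borel_measurable M" "X2 \<in> borel_measurable M"
  shows "0 \<le> Gcov M X1 X2 t"
proof (cases "0 \<le> t")
  case True
  then show ?thesis unfolding Gcov_eq_covariance by (intro PQD_covariance_clip_nonneg[OF assms]) auto
qed (simp add: Gcov_nonpos_arg)

lemma Gcov_mono:
  assumes "PQD M X1 X2" "X1 \<in> borel_measurable M" "X2 \<in> borel_measurable M"
  shows "mono (Gcov M X1 X2)"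
proof (rule monoI)
  fix s t :: real assume "s \<le> t"
  show "Gcov M X1 X2 s \<le> Gcov M X1 X2 t"
  proof (cases "0 \<le> s")
    case True
    then show ?thesis
      unfolding Gcov_eq_covariance clip_symmetric_split[OF True \<open>s \<le> t\<close>]
      by (intro PQD_covariance_clip_le_sum[OF assms]) (use \<open>s \<le> t\<close> in auto)
  qed (simp add: Gcov_nonpos_arg Gcov_nonneg[OF assms])
qed

lemma covariance_clip_nonneg_le_Gcov:
  assumes "PQD M X1 X2" "X1 \<in> borel_measurable M" "X2 \<in> borel_measurable M"
    and "0 \<le> k" "k \<le> t"
  shows "covariance M (\<lambda>\<omega>. clip 0 k (X1 \<omega>)) (\<lambda>\<omega>. clip 0 t (X2 \<omega>)) \<le> Gcov M X1 X2 t"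
  unfolding Gcov_eq_covariance
  apply (subst (1) clip_symmetric_split_nonneg[OF assms(4,5)])
  apply (subst (1) clip_symmetric_split_nonneg[OF order_trans[OF assms(4,5)] order_refl])
  apply (rule PQD_covariance_clip_le_sum[OF assms(1-3)])
  using assms(4,5) by auto

lemma covariance_clip_nonpos_le_Gcov:
  assumes "PQD M X1 X2" "X1 \<in> borel_measurable M" "X2 \<in> borel_measurable M"
    and "0 \<le> k" "k \<le> t"
  shows "covariance M (\<lambda>\<omega>. clip (-k) 0 (X1 \<omega>)) (\<lambda>\<omega>. clip (-t) 0 (X2 \<omega>)) \<le> Gcov M X1 X2 t"
  unfolding Gcov_eq_covariance
  apply (subst (1) clip_symmetric_split_nonpos[OF assms(4,5)])
  apply (subst (1) clip_symmetric_split_nonpos[OF order_trans[OF assms(4,5)] order_refl])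
  apply (rule PQD_covariance_clip_le_sum[OF assms(1-3)])
  using assms(4,5) by auto

lemma abs_Gcov_le:
  fixes X1 X2 :: "'a \<Rightarrow> real"
  assumes [measurable]: "X1 \<in> borel_measurable M" "X2 \<in> borel_measurable M"
    and "integrable M X2" "0 \<le> t"
  shows "\<bar>Gcov M X1 X2 t\<bar> \<le> 2 * t * expectation (\<lambda>\<omega>. \<bar>X2 \<omega>\<bar>)"
proof -
  let ?U = "\<lambda>\<omega>. clip (-t) t (X1 \<omega>)" and ?V = "\<lambda>\<omega>. clip (-t) t (X2 \<omega>)"
  have U: "\<bar>?U \<omega>\<bar> \<le> t" and V: "\<bar>?V \<omega>\<bar> \<le> \<bar>X2 \<omega>\<bar>" "\<bar>?V \<omega>\<bar> \<le> t" for \<omega>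
    using \<open>0 \<le> t\<close> unfolding clip_def by auto
  have "integrable M ?U" "integrable M ?V" "integrable M (\<lambda>\<omega>. ?U \<omega> * ?V \<omega>)"
    using integrable_clip integrable_clip_mult_clip by auto
  then have "Gcov M X1 X2 t = expectation (\<lambda>\<omega>. ?U \<omega> * (?V \<omega> - expectation ?V))"
    unfolding Gcov_eq_covariance covariance_def by (simp add: right_diff_distrib)
  also have "\<bar>\<dots>\<bar> \<le> expectation (\<lambda>\<omega>. t * (\<bar>X2 \<omega>\<bar> + expectation (\<lambda>\<omega>. \<bar>X2 \<omega>\<bar>)))"
  proof (rule order_trans[OF integral_abs_bound integral_mono])
    show "integrable M (\<lambda>\<omega>. \<bar>?U \<omega> * (?V \<omega> - expectation ?V)\<bar>)"
      using \<open>integrable M (\<lambda>\<omega>. ?U \<omega> * ?V \<omega>)\<close> \<open>integrable M ?U\<close> by (simp add: right_diff_distrib)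
    show "integrable M (\<lambda>\<omega>. t * (\<bar>X2 \<omega>\<bar> + expectation (\<lambda>\<omega>. \<bar>X2 \<omega>\<bar>)))"
      using \<open>integrable M X2\<close> by simp
    have "\<bar>expectation ?V\<bar> \<le> expectation (\<lambda>\<omega>. \<bar>X2 \<omega>\<bar>)"
      using \<open>integrable M ?V\<close> \<open>integrable M X2\<close> V(1)
      by (intro order_trans[OF integral_abs_bound integral_mono]) auto
    then show "\<bar>?U \<omega> * (?V \<omega> - expectation ?V)\<bar> \<le> t * (\<bar>X2 \<omega>\<bar> + expectation (\<lambda>\<omega>. \<bar>X2 \<omega>\<bar>))" for \<omega>
      unfolding abs_mult using U[of \<omega>] V(1)[of \<omega>] \<open>0 \<le> t\<close> by (intro mult_mono) auto
  qed
  also have "\<dots> = 2 * t * expectation (\<lambda>\<omega>. \<bar>X2 \<omega>\<bar>)"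
    using \<open>integrable M X2\<close> by (simp add: prob_space algebra_simps)
  finally show ?thesis .
qed

lemma set_integrable_Gcov_div_cube:
  assumes "PQD M X1 X2" and [measurable]: "X1 \<in> borel_measurable M" "X2 \<in> borel_measurable M"
    and "integrable M X2" "0 < r"
  shows "set_integrable lborel {r..} (\<lambda>t. Gcov M X1 X2 t / t ^ 3)"
  unfolding set_integrable_def
proof (rule Bochner_Integration.integrable_bound)
  let ?c = "2 * expectation (\<lambda>\<omega>. \<bar>X2 \<omega>\<bar>)"
  show "integrable lborel (\<lambda>t. ?c * (indicator {r..} t *\<^sub>R (1 / t\<^sup>2)))"
    by (rule integrable_mult_right[OF set_integrable_inverse_sq[OF \<open>0 < r\<close>, unfolded set_integrable_def]])
  have "\<bar>Gcov M X1 X2 t / t ^ 3\<bar> \<le> ?c * (1 / t\<^sup>2)" if "r \<le> t" for t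
  proof -
    have "0 < t" using \<open>0 < r\<close> that by simp
    then have "\<bar>Gcov M X1 X2 t\<bar> / t ^ 3 \<le> 2 * t * expectation (\<lambda>\<omega>. \<bar>X2 \<omega>\<bar>) / t ^ 3"
      using abs_Gcov_le[OF assms(2-4)] by (simp add: divide_right_mono)
    with \<open>0 < t\<close> show ?thesis by (simp add: abs_divide power2_eq_square power3_eq_cube)
  qed
  then show "AE t in lborel. norm (indicator {r..} t *\<^sub>R (Gcov M X1 X2 t / t ^ 3))
      \<le> norm (?c * (indicator {r..} t *\<^sub>R (1 / t\<^sup>2)))"
    by (intro AE_I2) (auto simp: indicator_def)
  show "(\<lambda>t. indicator {r..} t *\<^sub>R (Gcov M X1 X2 t / t ^ 3)) \<in> borel_measurable lborel"
    using borel_measurable_mono[OF Gcov_mono[OF assms(1-3)]] by measurable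
qed

text \<open>Since \<open>Gcov\<close> is nondecreasing, \<open>Gcov t / t\<^sup>3 \<ge> Gcov r / (2 r)\<^sup>3\<close> on \<open>[r, 2r]\<close>.\<close>

lemma Gcov_div_sq_le_tail_integral:
  assumes "PQD M X1 X2" and [measurable]: "X1 \<in> borel_measurable M" "X2 \<in> borel_measurable M"
    and "integrable M X2" "0 < r"
  shows "Gcov M X1 X2 r / r\<^sup>2 \<le> 8 * (LBINT t:{r..}. Gcov M X1 X2 t / t ^ 3)"
proof -
  let ?G = "Gcov M X1 X2"
  have "?G r / r\<^sup>2 = 8 * (\<integral>t. indicator {r..2*r} t * (?G r / (8 * r ^ 3)) \<partial>lborel)"
    using \<open>0 < r\<close> by (simp add: measure_lborel_Icc power2_eq_square power3_eq_cube field_simps)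
  also have "(\<integral>t. indicator {r..2*r} t * (?G r / (8 * r ^ 3)) \<partial>lborel) \<le> (LBINT t:{r..}. ?G t / t ^ 3)"
    unfolding set_lebesgue_integral_def
  proof (rule integral_mono)
    show "integrable lborel (\<lambda>t. indicator {r..2*r} t * (?G r / (8 * r ^ 3)))"
      by (intro integrable_mult_left integrable_real_indicator) (auto simp: emeasure_lborel_Icc_eq)
    show "integrable lborel (\<lambda>t. indicator {r..} t *\<^sub>R (?G t / t ^ 3))"
      using set_integrable_Gcov_div_cube[OF assms] unfolding set_integrable_def .
    fix t :: real
    have "?G r / (8 * r ^ 3) \<le> ?G t / t ^ 3" if "r \<le> t" "t \<le> 2 * r"
    proof (rule frac_le)
      show "?G r \<le> ?G t" using Gcov_mono[OF assms(1-3)] \<open>r \<le> t\<close> by (simp add: mono_def)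
      show "t ^ 3 \<le> 8 * r ^ 3" using power_mono[OF \<open>t \<le> 2 * r\<close>, of 3] \<open>0 < r\<close> that by simp
    qed (use Gcov_nonneg[OF assms(1-3)] \<open>0 < r\<close> that in auto)
    then show "indicator {r..2*r} t * (?G r / (8 * r ^ 3)) \<le> indicator {r..} t *\<^sub>R (?G t / t ^ 3)"
      using Gcov_nonneg[OF assms(1-3), of t] \<open>0 < r\<close> by (auto simp: indicator_def)
  qed
  finally show ?thesis by simp
qed

end

section \<open>Cesaro averages and geometric subsequences\<close>

definition geom_index :: "real \<Rightarrow> nat \<Rightarrow> nat" where
  "geom_index \<alpha> m = nat \<lfloor>\<alpha> ^ m\<rfloor>"

lemma geom_index_bounds:
  assumes "1 \<le> \<alpha>"
  shows "1 \<le> geom_index \<alpha> m" "real (geom_index \<alpha> m) \<le> \<alpha> ^ m" "\<alpha> ^ m \<le> 2 * real (geom_index \<alpha> m)"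
proof -
  have p: "1 \<le> \<alpha> ^ m" using assms by (simp add: one_le_power)
  then show "1 \<le> geom_index \<alpha> m" unfolding geom_index_def by linarith
  show "real (geom_index \<alpha> m) \<le> \<alpha> ^ m" unfolding geom_index_def using p by linarith
  have f1: "real_of_int \<lfloor>\<alpha> ^ m\<rfloor> > \<alpha> ^ m - 1" by linarith
  have f2: "\<lfloor>\<alpha> ^ m\<rfloor> \<ge> 1" using p by linarith
  have f3: "real (nat \<lfloor>\<alpha> ^ m\<rfloor>) = real_of_int \<lfloor>\<alpha> ^ m\<rfloor>" using f2 by simp
  show "\<alpha> ^ m \<le> 2 * real (geom_index \<alpha> m)" unfolding geom_index_def f3 using f1 f2 by linarith
qed

lemma geom_index_mono: "1 \<le> \<alpha> \<Longrightarrow> geom_index \<alpha> m \<le> geom_index \<alpha> (Suc m)"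
  unfolding geom_index_def by (intro nat_mono floor_mono) (simp add: mult_le_cancel_right1 one_le_power)

lemma finite_geom_index_le:
  assumes a: "1 < \<alpha>"
  shows "finite {m. geom_index \<alpha> m \<le> n}"
proof -
  obtain N where N: "2 * real n < \<alpha> ^ N" using real_arch_pow[OF a] by blast
  have "{m. geom_index \<alpha> m \<le> n} \<subseteq> {..<N}"
  proof
    fix m assume "m \<in> {m. geom_index \<alpha> m \<le> n}"
    then have "\<alpha> ^ m \<le> 2 * real n" using geom_index_bounds(3)[of \<alpha> m] a by auto
    then have "\<not> N \<le> m" using N a by (meson le_less_trans not_le power_increasing_iff)
    then show "m \<in> {..<N}" by simp
  qed
  then show ?thesis by (rule finite_subset) simp
qed

lemma eventually_geom_index_ge: assumes "1 < \<alpha>" shows "eventually (\<lambda>m. x \<le> real (geom_index \<alpha> m)) sequentially"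
proof -
  obtain N where N: "2 * x < \<alpha> ^ N" using real_arch_pow[OF assms] by blast
  show ?thesis unfolding eventually_sequentially
  proof (intro exI[of _ N] allI impI)
    fix m assume "N \<le> m"
    then have "\<alpha> ^ N \<le> \<alpha> ^ m" using assms by (simp add: power_increasing)
    moreover have "\<alpha> ^ m \<le> 2 * real (geom_index \<alpha> m)" using geom_index_bounds(3)[of \<alpha> m] assms by simp
    ultimately show "x \<le> real (geom_index \<alpha> m)" using N by linarith
  qed
qed

lemma sum_power_le_geometric:
  fixes q :: real
  assumes "0 \<le> q" "q < 1" "finite F"
  shows "(\<Sum>m\<in>F. q ^ m) \<le> 1 / (1 - q)"
proof -
  obtain N where F: "F \<subseteq> {..<N}"
    using assms(3) by (meson finite_nat_iff_bounded)
  have "(\<Sum>m\<in>F. q ^ m) \<le> (\<Sum>m<N. q ^ m)"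
    by (rule sum_mono2) (use F assms in auto)
  also have "\<dots> = (1 - q ^ N) / (1 - q)"
    using assms by (simp add: sum_gp_strict)
  also have "\<dots> \<le> 1 / (1 - q)"
    using assms by (simp add: divide_right_mono)
  finally show ?thesis .
qed

lemma sum_power_less_one_le:
  fixes q z :: real
  assumes "0 \<le> q" "q < 1" "finite F" "0 \<le> z" "\<And>m. m \<in> F \<Longrightarrow> q ^ m \<le> z"
  shows "(\<Sum>m\<in>F. q ^ m) \<le> z / (1 - q)"
proof (cases "F = {}")
  case True then show ?thesis using assms by simp
next
  case False
  define m0 where "m0 = Min F"
  have m0: "m0 \<in> F" "\<And>m. m \<in> F \<Longrightarrow> m0 \<le> m"
    using False assms(3) unfolding m0_def by auto
  have "(\<Sum>m\<in>F. q ^ m) = (\<Sum>m\<in>F. q ^ m0 * q ^ (m - m0))"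
    by (rule sum.cong) (auto simp: m0 power_add[symmetric])
  also have "\<dots> = q ^ m0 * (\<Sum>m\<in>F. q ^ (m - m0))"
    by (simp add: sum_distrib_left)
  also have "(\<Sum>m\<in>F. q ^ (m - m0)) = (\<Sum>i\<in>(\<lambda>m. m - m0) ` F. q ^ i)"
  proof (rule sum.reindex[symmetric, unfolded comp_def])
    show "inj_on (\<lambda>m. m - m0) F" using m0(2) by (rule inj_on_diff_nat[rotated]) simp
  qed
  also have "\<dots> \<le> 1 / (1 - q)"
    by (rule sum_power_le_geometric) (use assms in auto)
  finally have "(\<Sum>m\<in>F. q ^ m) \<le> q ^ m0 * (1 / (1 - q))"
    using assms by (simp add: mult_left_mono)
  also have "\<dots> \<le> z * (1 / (1 - q))"
    by (rule mult_right_mono) (use assms m0 in auto)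
  finally show ?thesis by simp
qed

lemma sum_power_greater_one_le:
  fixes \<alpha> z :: real
  assumes "1 < \<alpha>" "finite F" "\<And>m. m \<in> F \<Longrightarrow> \<alpha> ^ m \<le> z" "0 \<le> z"
  shows "(\<Sum>m\<in>F. \<alpha> ^ m) \<le> z * \<alpha> / (\<alpha> - 1)"
proof (cases "F = {}")
  case True
  then show ?thesis using assms by simp
next
  case False
  define M where "M = Max F"
  have M: "M \<in> F" "\<And>m. m \<in> F \<Longrightarrow> m \<le> M"
    using False assms(2) unfolding M_def by auto
  define q where "q = 1 / \<alpha>"
  have q: "0 \<le> q" "q < 1" using assms unfolding q_def by auto
  have "(\<Sum>m\<in>F. \<alpha> ^ m) = (\<Sum>m\<in>F. \<alpha> ^ M * q ^ (M - m))"
  proof (rule sum.cong)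
    fix m assume "m \<in> F"
    then have "M = m + (M - m)" using M by simp
    then have "\<alpha> ^ M = \<alpha> ^ m * \<alpha> ^ (M - m)" by (metis power_add)
    then show "\<alpha> ^ m = \<alpha> ^ M * q ^ (M - m)"
      using assms unfolding q_def by (simp add: power_one_over field_simps)
  qed simp
  also have "\<dots> = \<alpha> ^ M * (\<Sum>m\<in>F. q ^ (M - m))"
    by (simp add: sum_distrib_left)
  also have "(\<Sum>m\<in>F. q ^ (M - m)) = (\<Sum>i\<in>(\<lambda>m. M - m) ` F. q ^ i)"
  proof (rule sum.reindex[symmetric, unfolded comp_def])
    show "inj_on (\<lambda>m. M - m) F" using M(2) by (metis diff_diff_cancel inj_onI)
  qed
  also have "\<dots> \<le> 1 / (1 - q)"
    by (rule sum_power_le_geometric) (use q assms in auto)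
  also have "1 / (1 - q) = \<alpha> / (\<alpha> - 1)"
    using assms unfolding q_def by (simp add: field_simps)
  finally have "(\<Sum>m\<in>F. \<alpha> ^ m) \<le> \<alpha> ^ M * (\<alpha> / (\<alpha> - 1))"
    using assms by (simp add: mult_left_mono)
  also have "\<dots> \<le> z * (\<alpha> / (\<alpha> - 1))"
    by (rule mult_right_mono) (use assms M in auto)
  finally show ?thesis by simp
qed

lemma sum_geom_index_le:
  fixes \<alpha> y :: real
  assumes "1 < \<alpha>" "0 \<le> y" "finite F"
  shows "(\<Sum>m\<in>{m\<in>F. real (geom_index \<alpha> m) \<le> y}. real (geom_index \<alpha> m)) \<le> 2 * y * \<alpha> / (\<alpha> - 1)"
proof -
  have n: "real (geom_index \<alpha> m) \<le> \<alpha> ^ m" "\<alpha> ^ m \<le> 2 * real (geom_index \<alpha> m)" for m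
    using geom_index_bounds[of \<alpha> m] assms(1) by auto
  have "(\<Sum>m\<in>{m\<in>F. real (geom_index \<alpha> m) \<le> y}. real (geom_index \<alpha> m))
      \<le> (\<Sum>m\<in>{m\<in>F. real (geom_index \<alpha> m) \<le> y}. \<alpha> ^ m)"
    by (rule sum_mono) (use n in auto)
  also have "\<dots> \<le> (2 * y) * \<alpha> / (\<alpha> - 1)"
  proof (rule sum_power_greater_one_le)
    show "\<alpha> ^ m \<le> 2 * y" if "m \<in> {m\<in>F. real (geom_index \<alpha> m) \<le> y}" for m
      using that n(2)[of m] by simp
  qed (use assms in auto)
  finally show ?thesis by simp
qed

lemma sum_inverse_geom_index_le:
  fixes \<alpha> y :: real
  assumes "1 < \<alpha>" "0 < y" "finite F"
  shows "(\<Sum>m\<in>{m\<in>F. y < real (geom_index \<alpha> m)}. 1 / real (geom_index \<alpha> m)) \<le> 2 * \<alpha> / ((\<alpha> - 1) * y)"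
proof -
  let ?F = "{m\<in>F. y < real (geom_index \<alpha> m)}"
  have n: "1 \<le> real (geom_index \<alpha> m)" "real (geom_index \<alpha> m) \<le> \<alpha> ^ m" "\<alpha> ^ m \<le> 2 * real (geom_index \<alpha> m)" for m
    using geom_index_bounds[of \<alpha> m] assms(1) by auto
  have "1 / real (geom_index \<alpha> m) \<le> 2 * (1 / \<alpha>) ^ m" for m
  proof -
    have "1 / real (geom_index \<alpha> m) \<le> 1 / (\<alpha> ^ m / 2)"
      by (rule divide_left_mono) (use n[of m] assms(1) in auto)
    then show ?thesis by (simp add: power_one_over)
  qed
  then have "(\<Sum>m\<in>?F. 1 / real (geom_index \<alpha> m)) \<le> 2 * (\<Sum>m\<in>?F. (1 / \<alpha>) ^ m)"
    by (simp add: sum_distrib_left sum_mono)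
  also have "(\<Sum>m\<in>?F. (1 / \<alpha>) ^ m) \<le> (1 / y) / (1 - 1 / \<alpha>)"
  proof (rule sum_power_less_one_le)
    fix m assume "m \<in> ?F"
    then have "y < \<alpha> ^ m" using n[of m] by auto
    then show "(1 / \<alpha>) ^ m \<le> 1 / y" using assms(2) by (simp add: power_one_over frac_le)
  qed (use assms in auto)
  also have "(1 / y) / (1 - 1 / \<alpha>) = \<alpha> / ((\<alpha> - 1) * y)"
    using assms by (simp add: field_simps)
  finally show ?thesis by simp
qed

lemma sum_min_sq_div_geom_index_le:
  fixes \<alpha> y :: real
  assumes "1 < \<alpha>" "0 \<le> y" "finite F"
  shows "(\<Sum>m\<in>F. (min y (real (geom_index \<alpha> m)))\<^sup>2 / real (geom_index \<alpha> m)) \<le> 4 * \<alpha> / (\<alpha> - 1) * y"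
proof (cases "y = 0")
  case False
  let ?n = "\<lambda>m. real (geom_index \<alpha> m)"
  have parts: "F \<inter> {m. ?n m \<le> y} = {m\<in>F. ?n m \<le> y}" "F - {m. ?n m \<le> y} = {m\<in>F. y < ?n m}"
    by auto
  have "(\<Sum>m\<in>F. (min y (?n m))\<^sup>2 / ?n m) =
      (\<Sum>m\<in>{m\<in>F. ?n m \<le> y}. (min y (?n m))\<^sup>2 / ?n m) + (\<Sum>m\<in>{m\<in>F. y < ?n m}. (min y (?n m))\<^sup>2 / ?n m)"
    unfolding parts[symmetric] by (rule sum.Int_Diff[OF assms(3)])
  also have "\<dots> = (\<Sum>m\<in>{m\<in>F. ?n m \<le> y}. ?n m) + y\<^sup>2 * (\<Sum>m\<in>{m\<in>F. y < ?n m}. 1 / ?n m)"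
    unfolding sum_distrib_left
    by (intro arg_cong2[where f="(+)"] sum.cong) (auto simp: power2_eq_square)
  also have "\<dots> \<le> 2 * y * \<alpha> / (\<alpha> - 1) + y\<^sup>2 * (2 * \<alpha> / ((\<alpha> - 1) * y))"
    using sum_geom_index_le[OF assms] sum_inverse_geom_index_le[OF assms(1) _ assms(3), of y] assms False
    by (intro add_mono mult_left_mono) auto
  also have "y\<^sup>2 * (2 * \<alpha> / ((\<alpha> - 1) * y)) = 2 * y * \<alpha> / (\<alpha> - 1)"
    using False by (simp add: power2_eq_square)
  finally show ?thesis
    by (simp add: field_simps)
qed simp

lemma sum_inverse_sq_geom_index_le:
  fixes \<alpha> j :: real
  assumes a: "1 < \<alpha>" and j: "0 < j" and F: "finite F"
  shows "(\<Sum>m\<in>{m\<in>F. j \<le> real (geom_index \<alpha> m)}. 1 / (real (geom_index \<alpha> m))\<^sup>2) \<le> 4 * \<alpha>\<^sup>2 / (\<alpha>\<^sup>2 - 1) / j\<^sup>2"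
proof -
  let ?n = "\<lambda>m. real (geom_index \<alpha> m)"
  have nb: "1 \<le> ?n m" "?n m \<le> \<alpha> ^ m" "\<alpha> ^ m \<le> 2 * ?n m" for m
    using geom_index_bounds[of \<alpha> m] a by auto
  let ?F = "{m\<in>F. j \<le> ?n m}"
  have "(\<Sum>m\<in>?F. 1 / (?n m)\<^sup>2) \<le> (\<Sum>m\<in>?F. 4 * (1 / \<alpha>\<^sup>2) ^ m)"
  proof (rule sum_mono)
    fix m
    have "(\<alpha> ^ m)\<^sup>2 \<le> (2 * ?n m)\<^sup>2" by (rule power_mono) (use nb[of m] a in auto)
    then have "1 / (?n m)\<^sup>2 \<le> 4 / (\<alpha> ^ m)\<^sup>2"
      using nb[of m] a by (simp add: field_simps power2_eq_square)
    also have "\<dots> = 4 * (1 / \<alpha>\<^sup>2) ^ m" by (simp add: power_one_over power_mult_distrib[symmetric] power_mult[symmetric] mult.commute)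
    finally show "1 / (?n m)\<^sup>2 \<le> 4 * (1 / \<alpha>\<^sup>2) ^ m" .
  qed
  also have "\<dots> = 4 * (\<Sum>m\<in>?F. (1 / \<alpha>\<^sup>2) ^ m)" by (simp add: sum_distrib_left)
  also have "(\<Sum>m\<in>?F. (1 / \<alpha>\<^sup>2) ^ m) \<le> (1 / j\<^sup>2) / (1 - 1 / \<alpha>\<^sup>2)"
  proof (rule sum_power_less_one_le)
    show "finite ?F" using F by auto
    fix m assume "m \<in> ?F"
    then have "j \<le> \<alpha> ^ m" using nb[of m] by auto
    then have "j\<^sup>2 \<le> (\<alpha> ^ m)\<^sup>2" using j by (simp add: power_mono)
    then show "(1 / \<alpha>\<^sup>2) ^ m \<le> 1 / j\<^sup>2" using j a
      by (simp add: power_one_over frac_le power_mult[symmetric] power_mult_distrib mult.commute)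
  qed (use a j in \<open>auto simp: power_less_one_iff\<close>)
  also have "(1 / j\<^sup>2) / (1 - 1 / \<alpha>\<^sup>2) = \<alpha>\<^sup>2 / (\<alpha>\<^sup>2 - 1) / j\<^sup>2"
    using a j by (simp add: field_simps)
  finally show ?thesis by simp
qed

lemma sum_partial_sum_div_geom_index_sq_le:
  fixes h :: "nat \<Rightarrow> real"
  assumes \<alpha>_gt_1: "1 < \<alpha>" and h_nonneg: "\<And>j. 0 \<le> h j" and sum_h: "\<And>J. (\<Sum>j=1..J. h j / (real j)\<^sup>2) \<le> K"
  shows "(\<Sum>m<N. (\<Sum>j=1..geom_index \<alpha> m. h j) / (real (geom_index \<alpha> m))\<^sup>2) \<le> 4 * \<alpha>\<^sup>2 / (\<alpha>\<^sup>2 - 1) * K"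
proof -
  let ?n = "geom_index \<alpha>"
  let ?c = "4 * \<alpha>\<^sup>2 / (\<alpha>\<^sup>2 - 1)"
  define J where "J = (\<Sum>m<N. ?n m)"
  have n_le_J: "?n m \<le> J" if "m < N" for m
    unfolding J_def using that by (intro member_le_sum) auto
  have "(\<Sum>m<N. (\<Sum>j=1..?n m. h j) / (real (?n m))\<^sup>2) = (\<Sum>m<N. \<Sum>j\<in>{j. j \<in> {1..J} \<and> j \<le> ?n m}. h j / (real (?n m))\<^sup>2)"
  proof (rule sum.cong[OF refl])
    fix m assume "m \<in> {..<N}"
    then have "{j. j \<in> {1..J} \<and> j \<le> ?n m} = {1..?n m}" using n_le_J[of m] by auto
    then show "(\<Sum>j=1..?n m. h j) / (real (?n m))\<^sup>2 = (\<Sum>j\<in>{j. j \<in> {1..J} \<and> j \<le> ?n m}. h j / (real (?n m))\<^sup>2)"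
      by (simp add: sum_divide_distrib)
  qed
  also have "\<dots> = (\<Sum>j\<in>{1..J}. \<Sum>m\<in>{m. m \<in> {..<N} \<and> j \<le> ?n m}. h j / (real (?n m))\<^sup>2)"
    by (rule sum.swap_restrict) auto
  also have "\<dots> \<le> (\<Sum>j\<in>{1..J}. h j * (?c / (real j)\<^sup>2))"
  proof (rule sum_mono)
    fix j assume j: "j \<in> {1..J}"
    have "(\<Sum>m\<in>{m. m \<in> {..<N} \<and> j \<le> ?n m}. h j / (real (?n m))\<^sup>2) = h j * (\<Sum>m\<in>{m\<in>{..<N}. real j \<le> real (?n m)}. 1 / (real (?n m))\<^sup>2)"
      by (simp add: sum_distrib_left)
    also have "\<dots> \<le> h j * (?c / (real j)\<^sup>2)"
    proof (rule mult_left_mono)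
      show "(\<Sum>m\<in>{m\<in>{..<N}. real j \<le> real (?n m)}. 1 / (real (?n m))\<^sup>2) \<le> ?c / (real j)\<^sup>2"
        by (rule sum_inverse_sq_geom_index_le[OF \<alpha>_gt_1]) (use j in auto)
    qed (rule h_nonneg)
    finally show "(\<Sum>m\<in>{m. m \<in> {..<N} \<and> j \<le> ?n m}. h j / (real (?n m))\<^sup>2) \<le> h j * (?c / (real j)\<^sup>2)" .
  qed
  also have "\<dots> = ?c * (\<Sum>j=1..J. h j / (real j)\<^sup>2)"
    unfolding sum_distrib_left by (rule sum.cong) (simp_all add: field_simps)
  also have "\<dots> \<le> ?c * K"
  proof (rule mult_left_mono)
    show "0 \<le> ?c" using \<alpha>_gt_1 by (simp add: one_less_power)
  qed (rule sum_h)
  finally show ?thesis .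
qed

lemma weighted_sum_le_head_plus_tail:
  fixes b d :: "nat \<Rightarrow> real"
  assumes "\<And>k. 0 \<le> b k" "\<And>k. K < k \<Longrightarrow> d k \<le> \<epsilon>" "0 \<le> \<epsilon>"
    and "(\<Sum>k=1..n. b k) \<le> \<beta> * real n" "K \<le> n"
  shows "(\<Sum>k=1..n. b k * d k) \<le> (\<Sum>k=1..K. b k * d k) + \<epsilon> * (\<beta> * real n)"
proof -
  have "{1..n} = {1..K} \<union> {Suc K..n}"
    using \<open>K \<le> n\<close> by auto
  then have "(\<Sum>k=1..n. b k * d k) = (\<Sum>k=1..K. b k * d k) + (\<Sum>k=Suc K..n. b k * d k)"
    by (metis (no_types, lifting) Suc_le_eq atLeastAtMost_iff disjoint_iff finite_atLeastAtMost
        not_le sum.union_disjoint)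
  also have "(\<Sum>k=Suc K..n. b k * d k) \<le> (\<Sum>k=Suc K..n. \<epsilon> * b k)"
  proof (rule sum_mono)
    fix k assume "k \<in> {Suc K..n}"
    then have "d k \<le> \<epsilon>"
      using assms(2) by simp
    then show "b k * d k \<le> \<epsilon> * b k"
      using mult_right_mono[OF \<open>d k \<le> \<epsilon>\<close> assms(1)[of k]] by (simp add: mult.commute)
  qed
  also have "\<dots> \<le> \<epsilon> * (\<Sum>k=1..n. b k)"
    unfolding sum_distrib_left[symmetric] using assms(1,3) by (intro mult_left_mono sum_mono2) auto
  also have "\<dots> \<le> \<epsilon> * (\<beta> * real n)"
    using assms(3,4) by (rule mult_left_mono[rotated])
  finally show ?thesis by simp
qed

lemma weighted_Cesaro_tendsto_zero:
  fixes b d e :: "nat \<Rightarrow> real"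
  assumes b: "\<And>k. 0 \<le> b k" and d: "\<And>k. 0 \<le> d k" "\<And>k. d k \<le> e k"
    and e: "e \<longlonglongrightarrow> 0" and sum_b: "\<And>n. (\<Sum>k=1..n. b k) \<le> \<beta> * real n"
  shows "(\<lambda>n. (\<Sum>k=1..n. b k * d k) / real n) \<longlonglongrightarrow> 0"
proof (rule LIMSEQ_I)
  fix r :: real assume "0 < r"
  have "0 \<le> \<beta>" using sum_b[of 1] b[of 1] by simp
  define \<epsilon> where "\<epsilon> = r / (2 * (\<beta> + 1))"
  have "0 < \<epsilon>" "\<epsilon> * \<beta> \<le> r / 2"
    using \<open>0 < r\<close> \<open>0 \<le> \<beta>\<close> unfolding \<epsilon>_def by (auto simp: field_simps)
  obtain K where K: "\<And>k. K \<le> k \<Longrightarrow> \<bar>e k\<bar> < \<epsilon>"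
    using LIMSEQ_D[OF e \<open>0 < \<epsilon>\<close>] by auto
  define c where "c = (\<Sum>k=1..K. b k * d k)"
  obtain N where N: "2 * c / r < real N" using reals_Archimedean2 by blast
  show "\<exists>n0. \<forall>n\<ge>n0. norm ((\<Sum>k=1..n. b k * d k) / real n - 0) < r"
  proof (intro exI[of _ "max (Suc N) K"] allI impI)
    fix n assume n: "max (Suc N) K \<le> n"
    have "d k \<le> \<epsilon>" if "K < k" for k
      using d(2)[of k] K[of k] that by (simp add: abs_less_iff)
    then have "(\<Sum>k=1..n. b k * d k) \<le> c + \<epsilon> * (\<beta> * real n)"
      unfolding c_def using b sum_b[of n] n \<open>0 < \<epsilon>\<close>
      by (intro weighted_sum_le_head_plus_tail) auto
    also have "\<dots> < r / 2 * real n + r / 2 * real n"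
    proof -
      have "2 * c / r < real n"
        using N n by linarith
      then have "c < r / 2 * real n"
        using \<open>0 < r\<close> by (simp add: field_simps)
      moreover have "\<epsilon> * (\<beta> * real n) \<le> r / 2 * real n"
        using mult_right_mono[OF \<open>\<epsilon> * \<beta> \<le> r / 2\<close>, of "real n"] by (simp add: mult.assoc)
      ultimately show ?thesis
        by linarith
    qed
    finally show "norm ((\<Sum>k=1..n. b k * d k) / real n - 0) < r"
      using b d n by (simp add: sum_nonneg field_simps)
  qed
qed

lemma double_sum_symmetric:
  fixes g :: "nat \<Rightarrow> nat \<Rightarrow> real"
  assumes sym: "\<And>k j. g k j = g j k"
  shows "(\<Sum>k=1..n. \<Sum>j=1..n. g k j) = (\<Sum>k=1..n. g k k) + 2 * (\<Sum>j=1..n. \<Sum>k=1..<j. g k j)"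
proof (induction n)
  case 0 then show ?case by simp
next
  case (Suc n)
  have "(\<Sum>k=1..Suc n. \<Sum>j=1..Suc n. g k j) = (\<Sum>k=1..n. \<Sum>j=1..Suc n. g k j) + (\<Sum>j=1..Suc n. g (Suc n) j)"
    by simp
  also have "(\<Sum>k=1..n. \<Sum>j=1..Suc n. g k j) = (\<Sum>k=1..n. \<Sum>j=1..n. g k j) + (\<Sum>k=1..n. g k (Suc n))"
    by (simp add: sum.distrib)
  also have "(\<Sum>j=1..Suc n. g (Suc n) j) = (\<Sum>j=1..n. g j (Suc n)) + g (Suc n) (Suc n)"
    by (simp add: sym)
  also have "(\<Sum>k=1..n. g k (Suc n)) = (\<Sum>k=1..<Suc n. g k (Suc n))"
    by (simp add: atLeastLessThanSuc_atLeastAtMost)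
  finally show ?case using Suc by (simp add: atLeastLessThanSuc_atLeastAtMost)
qed

lemma geom_index_bracket:
  assumes "1 < \<alpha>" "geom_index \<alpha> M0 \<le> n"
  obtains m where "M0 \<le> m" "geom_index \<alpha> m \<le> n" "n < geom_index \<alpha> (Suc m)"
proof -
  define A where "A = {m. geom_index \<alpha> m \<le> n}"
  have "finite A" "M0 \<in> A"
    unfolding A_def using finite_geom_index_le[OF assms(1)] assms(2) by auto
  then have "M0 \<le> Max A" "Max A \<in> A"
    by (auto intro: Max_in)
  moreover have "Suc (Max A) \<notin> A"
    using Max_ge[OF \<open>finite A\<close>, of "Suc (Max A)"] by auto
  ultimately show ?thesis
    using that[of "Max A"] unfolding A_def by simp
qed

lemma geom_index_Suc_le:
  assumes "1 < \<alpha>"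
  shows "real (geom_index \<alpha> (Suc m)) \<le> 2 * \<alpha> * real (geom_index \<alpha> m)"
proof -
  have "real (geom_index \<alpha> (Suc m)) \<le> \<alpha> * \<alpha> ^ m"
    using geom_index_bounds(2)[of \<alpha> "Suc m"] assms by simp
  also have "\<dots> \<le> \<alpha> * (2 * real (geom_index \<alpha> m))"
    using geom_index_bounds(3)[of \<alpha> m] assms by (simp add: mult_left_mono)
  finally show ?thesis by simp
qed

lemma abs_diff_le_bracket:
  fixes S E :: "nat \<Rightarrow> real"
  assumes "mono S" "mono E" "n1 \<le> n" "n \<le> n2"
  shows "\<bar>S n - E n\<bar> \<le> \<bar>S n1 - E n1\<bar> + \<bar>S n2 - E n2\<bar> + (E n2 - E n1)"
  using monoD[OF assms(1) assms(3)] monoD[OF assms(1) assms(4)]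
    monoD[OF assms(2) assms(3)] monoD[OF assms(2) assms(4)]
  by (simp add: abs_le_iff abs_if)

lemma geom_index_interpolation:
  fixes S E :: "nat \<Rightarrow> real" and \<alpha> D \<delta> :: real
  assumes "1 < \<alpha>" "mono S" "mono E" "0 \<le> D" "0 < \<delta>"
    and lim: "(\<lambda>m. (S (geom_index \<alpha> m) - E (geom_index \<alpha> m)) / real (geom_index \<alpha> m)) \<longlonglongrightarrow> 0"
    and increment: "eventually (\<lambda>m. E (geom_index \<alpha> (Suc m)) - E (geom_index \<alpha> m) \<le> D * real (geom_index \<alpha> m))
                      sequentially"
  shows "eventually (\<lambda>n. \<bar>S n - E n\<bar> / real n \<le> D + (1 + 2 * \<alpha>) * \<delta>) sequentially"
proof -
  let ?n = "geom_index \<alpha>" and ?T = "\<lambda>n. S n - E n"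
  have pos: "0 < real (?n m)" for m
    using geom_index_bounds(1)[of \<alpha> m] assms(1) by simp
  have "eventually (\<lambda>m. \<bar>?T (?n m) / real (?n m)\<bar> < \<delta>) sequentially"
    using lim \<open>0 < \<delta>\<close> by (simp add: tendsto_iff dist_real_def)
  with increment have "eventually (\<lambda>m. \<bar>?T (?n m)\<bar> \<le> \<delta> * real (?n m) \<and>
      E (?n (Suc m)) - E (?n m) \<le> D * real (?n m)) sequentially"
    by eventually_elim (use pos in \<open>auto simp: abs_divide pos_divide_less_eq\<close>)
  then obtain M0 where M0: "\<And>m. M0 \<le> m \<Longrightarrow> \<bar>?T (?n m)\<bar> \<le> \<delta> * real (?n m) \<and>
      E (?n (Suc m)) - E (?n m) \<le> D * real (?n m)"
    by (auto simp: eventually_sequentially)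
  show ?thesis unfolding eventually_sequentially
  proof (intro exI[of _ "?n M0"] allI impI)
    fix n assume "?n M0 \<le> n"
    then obtain m where m: "M0 \<le> m" "?n m \<le> n" "n < ?n (Suc m)"
      using geom_index_bracket[OF assms(1)] by blast
    have "\<bar>?T n\<bar> \<le> \<bar>?T (?n m)\<bar> + \<bar>?T (?n (Suc m))\<bar> + (E (?n (Suc m)) - E (?n m))"
      by (rule abs_diff_le_bracket) (use assms(2,3) m in auto)
    also have "\<dots> \<le> \<delta> * real (?n m) + \<delta> * (2 * \<alpha> * real (?n m)) + D * real (?n m)"
    proof -
      have "\<delta> * real (?n (Suc m)) \<le> \<delta> * (2 * \<alpha> * real (?n m))"
        using geom_index_Suc_le[OF assms(1), of m] \<open>0 < \<delta>\<close> by simp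
      then show ?thesis
        using M0[of m] M0[of "Suc m"] m(1) by linarith
    qed
    also have "\<dots> = (D + (1 + 2 * \<alpha>) * \<delta>) * real (?n m)"
      by (simp add: algebra_simps)
    also have "\<dots> \<le> (D + (1 + 2 * \<alpha>) * \<delta>) * real n"
      using m(2) assms(1,4,5) by (intro mult_left_mono) auto
    finally show "\<bar>S n - E n\<bar> / real n \<le> D + (1 + 2 * \<alpha>) * \<delta>"
      using pos[of M0] \<open>?n M0 \<le> n\<close> by (simp add: pos_divide_le_eq)
  qed
qed

lemma sum_increment_le:
  fixes b \<nu> :: "nat \<Rightarrow> real" and L B t :: real
  assumes b_nonneg: "\<And>k. 0 \<le> b k" and \<nu>: "\<And>k. 1 \<le> k \<Longrightarrow> 0 \<le> \<nu> k \<and> \<nu> k \<le> L"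
    and sum_b_sq: "\<And>n. (\<Sum>k=1..n. (b k)\<^sup>2) \<le> B * real n" and t: "0 < t" and le: "n1 \<le> n2"
  shows "(\<Sum>k=1..n2. b k * \<nu> k) - (\<Sum>k=1..n1. b k * \<nu> k) \<le> L * (t * (real n2 - real n1) / 2 + B * real n2 / (2 * t))"
proof -
  have e: "{1..n2} = {1..n1} \<union> {n1<..n2}" using le by auto
  have "(\<Sum>k=1..n2. b k * \<nu> k) = (\<Sum>k=1..n1. b k * \<nu> k) + (\<Sum>k\<in>{n1<..n2}. b k * \<nu> k)"
    unfolding e by (rule sum.union_disjoint) auto
  moreover have "(\<Sum>k\<in>{n1<..n2}. b k * \<nu> k) \<le> L * (t * (real n2 - real n1) / 2 + B * real n2 / (2 * t))"
  proof -
    have L: "0 \<le> L" using \<nu>[of 1] by simp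
    have "(\<Sum>k\<in>{n1<..n2}. b k * \<nu> k) \<le> (\<Sum>k\<in>{n1<..n2}. L * (t / 2 + (b k)\<^sup>2 / (2 * t)))"
    proof (rule sum_mono)
      fix k assume k: "k \<in> {n1<..n2}"
      have "b k * \<nu> k \<le> b k * L" using \<nu>[of k] k b_nonneg[of k] by (simp add: mult_left_mono)
      also have "b k \<le> t / 2 + (b k)\<^sup>2 / (2 * t)"
      proof -
        have "0 \<le> (b k - t)\<^sup>2" by simp
        then have "2 * t * b k \<le> t\<^sup>2 + (b k)\<^sup>2" by (simp add: power2_eq_square algebra_simps)
        then show ?thesis using t by (simp add: field_simps power2_eq_square)
      qed
      then have "b k * L \<le> L * (t / 2 + (b k)\<^sup>2 / (2 * t))" using L by (simp add: mult.commute mult_left_mono)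
      finally show "b k * \<nu> k \<le> L * (t / 2 + (b k)\<^sup>2 / (2 * t))" .
    qed
    also have "\<dots> = L * (t / 2 * real (card {n1<..n2}) + (\<Sum>k\<in>{n1<..n2}. (b k)\<^sup>2) / (2 * t))"
      by (simp add: sum_distrib_left[symmetric] sum.distrib sum_divide_distrib[symmetric])
    also have "\<dots> \<le> L * (t * (real n2 - real n1) / 2 + B * real n2 / (2 * t))"
    proof (rule mult_left_mono[OF _ L])
      have "(\<Sum>k\<in>{n1<..n2}. (b k)\<^sup>2) \<le> (\<Sum>k=1..n2. (b k)\<^sup>2)"
        by (rule sum_mono2) auto
      also have "\<dots> \<le> B * real n2" by (rule sum_b_sq)
      finally have "(\<Sum>k\<in>{n1<..n2}. (b k)\<^sup>2) / (2 * t) \<le> B * real n2 / (2 * t)"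
        using t by (simp add: divide_right_mono)
      moreover have "t / 2 * real (card {n1<..n2}) = t * (real n2 - real n1) / 2"
        using le by (simp add: of_nat_diff)
      ultimately show "t / 2 * real (card {n1<..n2}) + (\<Sum>k\<in>{n1<..n2}. (b k)\<^sup>2) / (2 * t)
          \<le> t * (real n2 - real n1) / 2 + B * real n2 / (2 * t)" by linarith
    qed
    finally show ?thesis .
  qed
  ultimately show ?thesis by simp
qed

lemma geom_index_Suc_diff_le:
  assumes "0 < r" "1 \<le> r * real (geom_index (1 + r) m)"
  shows "real (geom_index (1 + r) (Suc m)) - real (geom_index (1 + r) m) \<le> 3 * r * real (geom_index (1 + r) m)"
proof -
  let ?n = "geom_index (1 + r)"
  have "1 \<le> (1 + r) ^ m"
    using assms(1) by (simp add: one_le_power)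
  then have "(1 + r) ^ m < real (?n m) + 1"
    unfolding geom_index_def by linarith
  then have "r * (1 + r) ^ m \<le> r * (real (?n m) + 1)"
    using assms(1) by simp
  moreover have "real (?n (Suc m)) \<le> (1 + r) * (1 + r) ^ m"
    using geom_index_bounds(2)[of "1 + r" "Suc m"] assms(1) by simp
  moreover have "r * 1 \<le> r * real (?n m)"
    using geom_index_bounds(1)[of "1 + r" m] assms(1) by (intro mult_left_mono) auto
  ultimately show ?thesis
    using \<open>(1 + r) ^ m < real (?n m) + 1\<close> assms(2) by (simp add: algebra_simps)
qed

text \<open>For \<open>\<alpha> = 1 + 1/q\<^sup>2\<close> consecutive indices satisfy \<open>n\<^sub>m\<^sub>+\<^sub>1 - n\<^sub>m = O(n\<^sub>m / q\<^sup>2)\<close>, so the bound of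
  \<open>sum_increment_le\<close> with \<open>t = q\<close> makes the increments \<open>O(n\<^sub>m / q)\<close>.\<close>

lemma eventually_geom_index_increment_le:
  fixes b \<nu> :: "nat \<Rightarrow> real" and L B q :: real
  assumes "\<And>k. 0 \<le> b k" "\<And>k. 1 \<le> k \<Longrightarrow> 0 \<le> \<nu> k \<and> \<nu> k \<le> L"
    and "\<And>n. (\<Sum>k=1..n. (b k)\<^sup>2) \<le> B * real n" "0 \<le> B" "1 \<le> q"
  shows "eventually (\<lambda>m. (\<Sum>k=1..geom_index (1 + 1 / q\<^sup>2) (Suc m). b k * \<nu> k)
      - (\<Sum>k=1..geom_index (1 + 1 / q\<^sup>2) m. b k * \<nu> k)
      \<le> L * (2 + 2 * B) / q * real (geom_index (1 + 1 / q\<^sup>2) m)) sequentially"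
proof -
  let ?\<alpha> = "1 + 1 / q\<^sup>2"
  let ?n = "geom_index ?\<alpha>"
  have "1 < ?\<alpha>" "?\<alpha> \<le> 2"
    using \<open>1 \<le> q\<close> by (auto simp: power_le_one_iff)
  have "0 \<le> L"
    using assms(2)[of 1] by simp
  have "eventually (\<lambda>m. q\<^sup>2 \<le> real (?n m)) sequentially"
    by (rule eventually_geom_index_ge[OF \<open>1 < ?\<alpha>\<close>])
  then show ?thesis
  proof eventually_elim
    case (elim m)
    let ?n1 = "real (?n m)" and ?n2 = "real (?n (Suc m))"
    have "?n2 - ?n1 \<le> 3 * (1 / q\<^sup>2) * ?n1"
      by (rule geom_index_Suc_diff_le) (use elim \<open>1 \<le> q\<close> in \<open>auto simp: field_simps\<close>)
    then have "q * (?n2 - ?n1) / 2 \<le> 3 / (2 * q) * ?n1"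
      using \<open>1 \<le> q\<close> mult_left_mono[of "?n2 - ?n1" "3 * (1 / q\<^sup>2) * ?n1" q]
      by (simp add: field_simps power2_eq_square)
    moreover have "B * ?n2 / (2 * q) \<le> 2 * B / q * ?n1"
    proof -
      have "?n2 \<le> 4 * ?n1"
        using geom_index_Suc_le[OF \<open>1 < ?\<alpha>\<close>, of m] mult_right_mono[OF \<open>?\<alpha> \<le> 2\<close>, of ?n1]
        by (simp add: algebra_simps)
      then have "B * ?n2 / (2 * q) \<le> B * (4 * ?n1) / (2 * q)"
        using \<open>0 \<le> B\<close> \<open>1 \<le> q\<close> by (intro divide_right_mono mult_left_mono) auto
      then show ?thesis
        by (simp add: field_simps)
    qed
    moreover have "3 / (2 * q) * ?n1 \<le> 2 / q * ?n1"
      using \<open>1 \<le> q\<close> by (intro mult_right_mono) (auto simp: field_simps)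
    moreover have "2 / q * ?n1 + 2 * B / q * ?n1 = (2 + 2 * B) / q * ?n1"
      by (simp add: add_divide_distrib distrib_right)
    ultimately have "q * (?n2 - ?n1) / 2 + B * ?n2 / (2 * q) \<le> (2 + 2 * B) / q * ?n1"
      by linarith
    have "(\<Sum>k=1..?n (Suc m). b k * \<nu> k) - (\<Sum>k=1..?n m. b k * \<nu> k)
        \<le> L * (q * (?n2 - ?n1) / 2 + B * ?n2 / (2 * q))"
      using \<open>1 \<le> q\<close> geom_index_mono[of ?\<alpha> m] \<open>1 < ?\<alpha>\<close>
      by (intro sum_increment_le[OF assms(1-3)]) auto
    also have "\<dots> \<le> L * ((2 + 2 * B) / q * ?n1)"
      by (rule mult_left_mono) fact+
    finally show ?case
      by simp
  qed
qed

lemma Cesaro_tendsto_zero_of_geom_index_subsequences: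
  fixes S b \<nu> :: "nat \<Rightarrow> real" and L B :: real
  defines "E \<equiv> \<lambda>n. \<Sum>k=1..n. b k * \<nu> k"
  assumes "mono S" "\<And>k. 0 \<le> b k" "\<And>k. 1 \<le> k \<Longrightarrow> 0 \<le> \<nu> k \<and> \<nu> k \<le> L"
    and "\<And>n. (\<Sum>k=1..n. (b k)\<^sup>2) \<le> B * real n" "0 \<le> B"
    and subsequences: "\<And>p. (\<lambda>m. (S (geom_index (1 + 1 / (real (Suc p))\<^sup>2) m) - E (geom_index (1 + 1 / (real (Suc p))\<^sup>2) m))
                            / real (geom_index (1 + 1 / (real (Suc p))\<^sup>2) m)) \<longlonglongrightarrow> 0"
  shows "(\<lambda>n. (S n - E n) / real n) \<longlonglongrightarrow> 0"
proof (rule LIMSEQ_I)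
  fix r :: real assume "0 < r"
  have "0 \<le> L" using assms(4)[of 1] by simp
  obtain p :: nat where p: "2 * (L * (2 + 2 * B)) / r < real (Suc p)"
    using reals_Archimedean2 less_Suc_eq of_nat_less_iff by (metis less_trans)
  define \<alpha> where "\<alpha> = 1 + 1 / (real (Suc p))\<^sup>2"
  define D where "D = L * (2 + 2 * B) / real (Suc p)"
  have "1 < \<alpha>" "\<alpha> \<le> 2"
    unfolding \<alpha>_def by (auto simp: power_le_one_iff)
  have "0 \<le> D" "D < r / 2"
    unfolding D_def using p \<open>0 < r\<close> \<open>0 \<le> L\<close> \<open>0 \<le> B\<close> by (auto simp: field_simps)
  have "mono E"
  proof (rule monoI)
    fix n n' :: nat assume "n \<le> n'"
    then show "E n \<le> E n'"
      unfolding E_def using assms(3,4) by (intro sum_mono2) (auto intro: mult_nonneg_nonneg)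
  qed
  have "eventually (\<lambda>m. E (geom_index \<alpha> (Suc m)) - E (geom_index \<alpha> m) \<le> D * real (geom_index \<alpha> m))
          sequentially"
    unfolding E_def \<alpha>_def D_def by (rule eventually_geom_index_increment_le[OF assms(3-6)]) auto
  then have bound: "eventually (\<lambda>n. \<bar>S n - E n\<bar> / real n \<le> D + (1 + 2 * \<alpha>) * (r / 10)) sequentially"
    using \<open>0 < r\<close> subsequences[of p, folded \<alpha>_def]
    by (intro geom_index_interpolation[OF \<open>1 < \<alpha>\<close> \<open>mono S\<close> \<open>mono E\<close> \<open>0 \<le> D\<close>]) simp_all
  have "D + (1 + 2 * \<alpha>) * (r / 10) < r"
  proof -
    have "(1 + 2 * \<alpha>) * (r / 10) \<le> 5 * (r / 10)"
      using \<open>\<alpha> \<le> 2\<close> \<open>0 < r\<close> by (intro mult_right_mono) auto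
    then show ?thesis
      using \<open>D < r / 2\<close> \<open>0 < r\<close> by linarith
  qed
  with bound have "eventually (\<lambda>n. norm ((S n - E n) / real n - 0) < r) sequentially"
    by (auto elim: eventually_mono simp: abs_divide)
  then show "\<exists>n0. \<forall>n\<ge>n0. norm ((S n - E n) / real n - 0) < r"
    by (simp add: eventually_sequentially)
qed

lemma Cesaro_tendsto_zero_of_eventually_zero:
  fixes f :: "nat \<Rightarrow> real"
  assumes "eventually (\<lambda>k. f k = 0) sequentially"
  shows "(\<lambda>n. (\<Sum>k=1..n. f k) / real n) \<longlonglongrightarrow> 0"
proof -
  obtain K where K: "\<And>k. K \<le> k \<Longrightarrow> f k = 0"
    using assms unfolding eventually_sequentially by blast
  have "eventually (\<lambda>n. (\<Sum>k=1..K. f k) / real n = (\<Sum>k=1..n. f k) / real n) sequentially"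
  proof (rule eventually_sequentiallyI)
    fix n assume "K \<le> n"
    have "(\<Sum>k=1..n. f k) = (\<Sum>k=1..K. f k)"
    proof (rule sum.mono_neutral_right)
      show "\<forall>k\<in>{1..n} - {1..K}. f k = 0"
        using K by auto
    qed (use \<open>K \<le> n\<close> in auto)
    then show "(\<Sum>k=1..K. f k) / real n = (\<Sum>k=1..n. f k) / real n"
      by simp
  qed
  then show ?thesis
    by (rule Lim_transform_eventually[OF lim_const_over_n])
qed

section \<open>Tail domination\<close>

lemma sum_indicator_less_le:
  fixes y :: real
  assumes "0 \<le> y"
  shows "(\<Sum>k<n. (if real k < y then 1 else 0 :: real)) \<le> y + 1"
proof (induction n)
  case 0 then show ?case using assms by simp
next
  case (Suc n)
  show ?case
  proof (cases "real n < y")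
    case True
    have "(\<Sum>k<Suc n. (if real k < y then 1 else 0 :: real)) \<le> (\<Sum>k<Suc n. (1::real))"
      by (rule sum_mono) auto
    then show ?thesis using True by simp
  next
    case False
    then show ?thesis using Suc by simp
  qed
qed

lemma less_min_sq_iff:
  fixes s z n :: real
  assumes "s < n\<^sup>2" "0 \<le> z" "0 \<le> n"
  shows "s < (min z n)\<^sup>2 \<longleftrightarrow> sqrt s < z"
proof -
  have lt_sq: "s < m\<^sup>2 \<longleftrightarrow> sqrt s < m" if "0 \<le> m" for m :: real
    using that real_sqrt_less_iff[of s "m\<^sup>2"] by simp
  then show ?thesis using assms by (auto simp: min_def)
qed

context prob_space
begin

lemma nn_integral_layer_cake:
  fixes U :: "'a \<Rightarrow> real"
  assumes [measurable]: "U \<in> borel_measurable M" and nn: "\<And>\<omega>. \<omega> \<in> space M \<Longrightarrow> 0 \<le> U \<omega>"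
  shows "(\<integral>\<^sup>+\<omega>. ennreal (U \<omega>) \<partial>M) = (\<integral>\<^sup>+s. indicator {0<..} s * emeasure M {\<omega>\<in>space M. s < U \<omega>} \<partial>lborel)"
proof -
  interpret P: pair_sigma_finite M lborel
    by (simp add: pair_sigma_finite_def lborel.sigma_finite_measure_axioms sigma_finite_measure_axioms)
  define g where "g = (\<lambda>\<omega> s. indicator {0<..<U \<omega>} s * indicator (space M) \<omega> :: ennreal)"
  have gm: "case_prod g \<in> borel_measurable (M \<Otimes>\<^sub>M lborel)"
  proof -
    have "case_prod g = (\<lambda>x. indicator {x\<in>space (M \<Otimes>\<^sub>M lborel). 0 < snd x \<and> snd x < U (fst x)} x)"
      by (auto simp: g_def fun_eq_iff indicator_def space_pair_measure)
    also have "\<dots> \<in> borel_measurable (M \<Otimes>\<^sub>M lborel)"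
      by (intro borel_measurable_indicator) measurable
    finally show ?thesis .
  qed
  have "(\<integral>\<^sup>+\<omega>. ennreal (U \<omega>) \<partial>M) = (\<integral>\<^sup>+\<omega>. (\<integral>\<^sup>+s. g \<omega> s \<partial>lborel) \<partial>M)"
    by (rule nn_integral_cong) (simp add: g_def nn)
  also have "\<dots> = (\<integral>\<^sup>+s. (\<integral>\<^sup>+\<omega>. g \<omega> s \<partial>M) \<partial>lborel)"
    by (rule P.Fubini'[OF gm, symmetric])
  also have "\<dots> = (\<integral>\<^sup>+s. indicator {0<..} s * emeasure M {\<omega>\<in>space M. s < U \<omega>} \<partial>lborel)"
  proof (rule nn_integral_cong)
    fix s :: real
    have "(\<integral>\<^sup>+\<omega>. g \<omega> s \<partial>M) = (\<integral>\<^sup>+\<omega>. indicator {0<..} s * indicator {\<omega>\<in>space M. s < U \<omega>} \<omega> \<partial>M)"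
      by (rule nn_integral_cong) (auto simp: g_def indicator_def)
    also have "\<dots> = indicator {0<..} s * emeasure M {\<omega>\<in>space M. s < U \<omega>}"
      by (subst nn_integral_cmult) auto
    finally show "(\<integral>\<^sup>+\<omega>. g \<omega> s \<partial>M) = indicator {0<..} s * emeasure M {\<omega>\<in>space M. s < U \<omega>}" .
  qed
  finally show ?thesis .
qed

lemma nn_integral_le_of_tail_le:
  fixes U V :: "'a \<Rightarrow> real"
  assumes [measurable]: "U \<in> borel_measurable M" "V \<in> borel_measurable M"
    and "\<And>\<omega>. \<omega> \<in> space M \<Longrightarrow> 0 \<le> U \<omega>" "\<And>\<omega>. \<omega> \<in> space M \<Longrightarrow> 0 \<le> V \<omega>"
    and C: "0 \<le> C" and tail: "\<And>s. 0 < s \<Longrightarrow> prob {\<omega>\<in>space M. s < U \<omega>} \<le> C * prob {\<omega>\<in>space M. s < V \<omega>}"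
  shows "(\<integral>\<^sup>+\<omega>. ennreal (U \<omega>) \<partial>M) \<le> ennreal C * (\<integral>\<^sup>+\<omega>. ennreal (V \<omega>) \<partial>M)"
proof -
  have "(\<integral>\<^sup>+\<omega>. ennreal (U \<omega>) \<partial>M) = (\<integral>\<^sup>+s. indicator {0<..} s * emeasure M {\<omega>\<in>space M. s < U \<omega>} \<partial>lborel)"
    by (rule nn_integral_layer_cake) (use assms in auto)
  also have "\<dots> \<le> (\<integral>\<^sup>+s. ennreal C * (indicator {0<..} s * emeasure M {\<omega>\<in>space M. s < V \<omega>}) \<partial>lborel)"
  proof (rule nn_integral_mono)
    fix s :: real
    show "indicator {0<..} s * emeasure M {\<omega>\<in>space M. s < U \<omega>} \<le> ennreal C * (indicator {0<..} s * emeasure M {\<omega>\<in>space M. s < V \<omega>})"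
    proof (cases "0 < s")
      case True
      then show ?thesis using tail[OF True] C
        by (simp add: emeasure_eq_measure ennreal_mult[symmetric])
    qed simp
  qed
  also have "\<dots> = ennreal C * (\<integral>\<^sup>+s. indicator {0<..} s * emeasure M {\<omega>\<in>space M. s < V \<omega>} \<partial>lborel)"
    by (rule nn_integral_cmult) measurable
  also have "(\<integral>\<^sup>+s. indicator {0<..} s * emeasure M {\<omega>\<in>space M. s < V \<omega>} \<partial>lborel) = (\<integral>\<^sup>+\<omega>. ennreal (V \<omega>) \<partial>M)"
    by (rule nn_integral_layer_cake[symmetric]) (use assms in auto)
  finally show ?thesis .
qed

lemma tail_dominated_integrable_le:
  fixes U V :: "'a \<Rightarrow> real"
  assumes [measurable]: "U \<in> borel_measurable M" "V \<in> borel_measurable M"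
    and U_nonneg: "\<And>\<omega>. \<omega> \<in> space M \<Longrightarrow> 0 \<le> U \<omega>" and V_nonneg: "\<And>\<omega>. \<omega> \<in> space M \<Longrightarrow> 0 \<le> V \<omega>"
    and C: "0 \<le> C" and tail: "\<And>s. 0 < s \<Longrightarrow> prob {\<omega>\<in>space M. s < U \<omega>} \<le> C * prob {\<omega>\<in>space M. s < V \<omega>}"
    and integrable_V: "integrable M V"
  shows "integrable M U" "expectation U \<le> C * expectation V"
proof -
  have le: "(\<integral>\<^sup>+\<omega>. ennreal (U \<omega>) \<partial>M) \<le> ennreal C * (\<integral>\<^sup>+\<omega>. ennreal (V \<omega>) \<partial>M)"
    by (rule nn_integral_le_of_tail_le) (use assms in auto)
  have eV: "(\<integral>\<^sup>+\<omega>. ennreal (V \<omega>) \<partial>M) = ennreal (expectation V)"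
    by (rule nn_integral_eq_integral) (use integrable_V V_nonneg in auto)
  have fin: "(\<integral>\<^sup>+\<omega>. ennreal (U \<omega>) \<partial>M) < \<infinity>"
  proof -
    have "ennreal C * ennreal (expectation V) < \<infinity>" by (simp add: ennreal_mult_less_top)
    then show ?thesis using le unfolding eV by (rule le_less_trans[rotated])
  qed
  show integrable_U: "integrable M U"
    by (rule integrableI_nonneg) (use U_nonneg fin in auto)
  have eU: "(\<integral>\<^sup>+\<omega>. ennreal (U \<omega>) \<partial>M) = ennreal (expectation U)"
    by (rule nn_integral_eq_integral) (use integrable_U U_nonneg in auto)
  have "0 \<le> expectation V" using V_nonneg by (simp add: integral_nonneg_AE)
  then show "expectation U \<le> C * expectation V"
    using le unfolding eU eV using C by (simp add: ennreal_mult[symmetric])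
qed

lemma summable_prob_abs_greater:
  fixes Y :: "'a \<Rightarrow> real"
  assumes [measurable]: "Y \<in> borel_measurable M" and "integrable M Y"
  shows "summable (\<lambda>k. prob {\<omega>\<in>space M. real k < \<bar>Y \<omega>\<bar>})"
proof (rule summableI_nonneg_bounded[where x="expectation (\<lambda>\<omega>. \<bar>Y \<omega>\<bar>) + 1"])
  fix n
  let ?N = "\<lambda>\<omega>. \<Sum>k<n. if real k < \<bar>Y \<omega>\<bar> then 1 else 0::real"
  have [measurable]: "(\<lambda>\<omega>. if real k < \<bar>Y \<omega>\<bar> then 1 else 0::real) \<in> borel_measurable M" for k
    by measurable
  have "(\<Sum>k<n. prob {\<omega>\<in>space M. real k < \<bar>Y \<omega>\<bar>}) = (\<Sum>k<n. expectation (\<lambda>\<omega>. if real k < \<bar>Y \<omega>\<bar> then 1 else 0))"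
    by (simp add: expectation_indicator_eq_prob)
  also have "\<dots> = expectation ?N"
    by (rule Bochner_Integration.integral_sum[symmetric], rule integrable_const_bound[where B=1]) auto
  also have "\<dots> \<le> expectation (\<lambda>\<omega>. \<bar>Y \<omega>\<bar> + 1)"
  proof (rule integral_mono)
    have "\<bar>?N \<omega>\<bar> \<le> real n" for \<omega>
      using sum_mono[of "{..<n}" "\<lambda>k. if real k < \<bar>Y \<omega>\<bar> then 1 else 0::real" "\<lambda>_. 1"]
      by (simp add: sum_nonneg)
    then show "integrable M ?N"
      by (intro integrable_const_bound[where B="real n"]) auto
    show "integrable M (\<lambda>\<omega>. \<bar>Y \<omega>\<bar> + 1)"
      using \<open>integrable M Y\<close> by simp
    show "?N \<omega> \<le> \<bar>Y \<omega>\<bar> + 1" for \<omega>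
      by (rule sum_indicator_less_le) simp
  qed
  finally show "(\<Sum>k<n. prob {\<omega>\<in>space M. real k < \<bar>Y \<omega>\<bar>}) \<le> expectation (\<lambda>\<omega>. \<bar>Y \<omega>\<bar>) + 1"
    using \<open>integrable M Y\<close> by (simp add: prob_space)
qed simp

lemma tendsto_expectation_excess:
  fixes Y :: "'a \<Rightarrow> real"
  assumes "integrable M Y"
  shows "(\<lambda>k. expectation (\<lambda>\<omega>. max (\<bar>Y \<omega>\<bar> - real k) 0)) \<longlonglongrightarrow> 0"
proof -
  have "(\<lambda>k. expectation (\<lambda>\<omega>. max (\<bar>Y \<omega>\<bar> - real k) 0)) \<longlonglongrightarrow> expectation (\<lambda>\<omega>. 0::real)"
  proof (rule integral_dominated_convergence[where w="\<lambda>\<omega>. \<bar>Y \<omega>\<bar>"])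
    show "AE \<omega> in M. (\<lambda>k. max (\<bar>Y \<omega>\<bar> - real k) 0) \<longlonglongrightarrow> 0"
    proof (rule AE_I2)
      fix \<omega>
      obtain N :: nat where "\<bar>Y \<omega>\<bar> \<le> real N" using real_arch_simple by blast
      then have "eventually (\<lambda>k. max (\<bar>Y \<omega>\<bar> - real k) 0 = 0) sequentially"
        unfolding eventually_sequentially by (intro exI[of _ N]) auto
      then show "(\<lambda>k. max (\<bar>Y \<omega>\<bar> - real k) 0) \<longlonglongrightarrow> 0" by (rule tendsto_eventually)
    qed
  qed (use assms borel_measurable_integrable in auto)
  then show ?thesis by simp
qed

lemma prob_less_min_sq_le:
  fixes U V :: "'a \<Rightarrow> real"
  assumes "\<And>s. 0 < s \<Longrightarrow> prob {\<omega>\<in>space M. s < U \<omega>} \<le> C * prob {\<omega>\<in>space M. s < V \<omega>}"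
    and "\<And>\<omega>. \<omega> \<in> space M \<Longrightarrow> 0 \<le> U \<omega>" "\<And>\<omega>. \<omega> \<in> space M \<Longrightarrow> 0 \<le> V \<omega>" "0 \<le> C" "0 \<le> n" "0 < s"
  shows "prob {\<omega>\<in>space M. s < (min (U \<omega>) n)\<^sup>2} \<le> C * prob {\<omega>\<in>space M. s < (min (V \<omega>) n)\<^sup>2}"
proof (cases "s < n\<^sup>2")
  case True
  then have "{\<omega>\<in>space M. s < (min (U \<omega>) n)\<^sup>2} = {\<omega>\<in>space M. sqrt s < U \<omega>}"
    "{\<omega>\<in>space M. s < (min (V \<omega>) n)\<^sup>2} = {\<omega>\<in>space M. sqrt s < V \<omega>}"
    using less_min_sq_iff[OF True] assms(2,3,5) by auto
  then show ?thesis
    using assms(1)[of "sqrt s"] \<open>0 < s\<close> by simp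
next
  case False
  have "\<not> s < (min (U \<omega>) n)\<^sup>2" if "\<omega> \<in> space M" for \<omega>
  proof -
    have "(min (U \<omega>) n)\<^sup>2 \<le> n\<^sup>2"
      by (rule power_mono) (use assms(2)[OF that] \<open>0 \<le> n\<close> in auto)
    then show ?thesis
      using False by linarith
  qed
  then have empty: "{\<omega>\<in>space M. s < (min (U \<omega>) n)\<^sup>2} = {}"
    by blast
  show ?thesis
    unfolding empty using \<open>0 \<le> C\<close> by simp
qed

lemma sum_expectation_min_sq_div_geom_index_le:
  fixes Y :: "'a \<Rightarrow> real"
  assumes [measurable]: "Y \<in> borel_measurable M" and "integrable M Y" "1 < \<alpha>"
  shows "(\<Sum>m<N. expectation (\<lambda>\<omega>. (min \<bar>Y \<omega>\<bar> (real (geom_index \<alpha> m)))\<^sup>2) / real (geom_index \<alpha> m))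
     \<le> 4 * \<alpha> / (\<alpha> - 1) * expectation (\<lambda>\<omega>. \<bar>Y \<omega>\<bar>)"
proof -
  let ?n = "\<lambda>m. real (geom_index \<alpha> m)"
  have integrable: "integrable M (\<lambda>\<omega>. (min \<bar>Y \<omega>\<bar> (?n m))\<^sup>2 / ?n m)" for m
    by (rule integrable_const_bound[where B="(?n m)\<^sup>2 / ?n m"])
       (auto simp: abs_le_square_iff divide_right_mono)
  have "(\<Sum>m<N. expectation (\<lambda>\<omega>. (min \<bar>Y \<omega>\<bar> (?n m))\<^sup>2) / ?n m)
      = expectation (\<lambda>\<omega>. \<Sum>m<N. (min \<bar>Y \<omega>\<bar> (?n m))\<^sup>2 / ?n m)"
    by (subst Bochner_Integration.integral_sum) (use integrable in auto)
  also have "\<dots> \<le> expectation (\<lambda>\<omega>. 4 * \<alpha> / (\<alpha> - 1) * \<bar>Y \<omega>\<bar>)"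
    using integrable \<open>integrable M Y\<close> sum_min_sq_div_geom_index_le[OF \<open>1 < \<alpha>\<close>]
    by (intro integral_mono Bochner_Integration.integrable_sum) auto
  finally show ?thesis
    by simp
qed

lemma AE_tendsto_zero_of_AE_eventually_less:
  fixes f :: "nat \<Rightarrow> 'a \<Rightarrow> real" and g :: "nat \<Rightarrow> real"
  assumes "\<And>\<epsilon>. 0 < \<epsilon> \<Longrightarrow> AE \<omega> in M. eventually (\<lambda>m. \<bar>f m \<omega>\<bar> < \<epsilon> * g m) sequentially"
    and "\<And>m. 0 < g m"
  shows "AE \<omega> in M. (\<lambda>m. f m \<omega> / g m) \<longlonglongrightarrow> 0"
proof -
  have "AE \<omega> in M. \<forall>q::nat. eventually (\<lambda>m. \<bar>f m \<omega>\<bar> < 1 / real (Suc q) * g m) sequentially"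
    unfolding AE_all_countable by (intro allI assms(1)) simp
  then show ?thesis
  proof (rule AE_mp[OF _ AE_I2], intro impI)
    fix \<omega> assume all: "\<forall>q::nat. eventually (\<lambda>m. \<bar>f m \<omega>\<bar> < 1 / real (Suc q) * g m) sequentially"
    show "(\<lambda>m. f m \<omega> / g m) \<longlonglongrightarrow> 0"
    proof (rule LIMSEQ_I)
      fix r :: real assume "0 < r"
      then obtain q :: nat where q: "1 / real (Suc q) < r"
        using reals_Archimedean by (auto simp: inverse_eq_divide)
      have "eventually (\<lambda>m. \<bar>f m \<omega>\<bar> < 1 / real (Suc q) * g m) sequentially"
        using all by blast
      then have "eventually (\<lambda>m. norm (f m \<omega> / g m - 0) < r) sequentially"
      proof (rule eventually_mono)
        fix m assume "\<bar>f m \<omega>\<bar> < 1 / real (Suc q) * g m"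
        then have "\<bar>f m \<omega>\<bar> / g m < 1 / real (Suc q)"
          using assms(2)[of m] by (simp add: pos_divide_less_eq)
        then show "norm (f m \<omega> / g m - 0) < r"
          using q assms(2)[of m] by (simp add: abs_divide)
      qed
      then show "\<exists>m0. \<forall>m\<ge>m0. norm (f m \<omega> / g m - 0) < r"
        by (simp add: eventually_sequentially)
    qed
  qed
qed

end

section \<open>Nonnegative summands\<close>

locale weighted_slln_nonneg = prob_space +
  fixes Z :: "nat \<Rightarrow> 'a \<Rightarrow> real" and b :: "nat \<Rightarrow> real" and Y :: "'a \<Rightarrow> real"
    and C B K :: real and H :: "nat \<Rightarrow> nat \<Rightarrow> real"
  assumes measurable_Z: "\<And>k. 1 \<le> k \<Longrightarrow> Z k \<in> borel_measurable M"
    and Z_nonneg: "\<And>k \<omega>. 1 \<le> k \<Longrightarrow> \<omega> \<in> space M \<Longrightarrow> 0 \<le> Z k \<omega>"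
    and measurable_Y[measurable]: "Y \<in> borel_measurable M" and integrable_Y: "integrable M Y"
    and C_nonneg: "0 \<le> C"
    and tail_le: "\<And>k s. 1 \<le> k \<Longrightarrow> 0 < s \<Longrightarrow>
                   prob {\<omega>\<in>space M. s < Z k \<omega>} \<le> C * prob {\<omega>\<in>space M. s < \<bar>Y \<omega>\<bar>}"
    and b_nonneg: "\<And>k. 0 \<le> b k"
    and sum_b_sq_le: "\<And>n. (\<Sum>k=1..n. (b k)\<^sup>2) \<le> B * real n"
    and covariance_le: "\<And>k j. 1 \<le> k \<Longrightarrow> k < j \<Longrightarrow>
       covariance M (\<lambda>\<omega>. min (Z k \<omega>) (real k)) (\<lambda>\<omega>. min (Z j \<omega>) (real j)) \<le> H k j"
    and H_nonneg: "\<And>k j. 1 \<le> k \<Longrightarrow> k < j \<Longrightarrow> 0 \<le> H k j"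
    and sum_H_le: "\<And>n. (\<Sum>j=1..n. \<Sum>k=1..<j. b k * b j * H k j / (real j)\<^sup>2) \<le> K"
begin

definition Z_trunc :: "nat \<Rightarrow> 'a \<Rightarrow> real" where
  "Z_trunc k \<omega> = min (Z k \<omega>) (real k)"

definition mean :: "nat \<Rightarrow> real" where
  "mean k = expectation (Z k)"

definition mean_trunc :: "nat \<Rightarrow> real" where
  "mean_trunc k = expectation (Z_trunc k)"

definition S_trunc :: "nat \<Rightarrow> 'a \<Rightarrow> real" where
  "S_trunc n \<omega> = (\<Sum>k=1..n. b k * (Z_trunc k \<omega> - mean_trunc k))"

definition H_row :: "nat \<Rightarrow> real" where
  "H_row j = (\<Sum>k=1..<j. b k * b j * H k j)"

lemma B_nonneg: "0 \<le> B"
proof -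
  have "(b 1)\<^sup>2 \<le> B"
    using sum_b_sq_le[of 1] by simp
  then show ?thesis
    by (rule order_trans[OF zero_le_power2])
qed

lemma measurable_Z_trunc: "1 \<le> k \<Longrightarrow> Z_trunc k \<in> borel_measurable M"
  unfolding Z_trunc_def using measurable_Z[of k] by measurable

lemma Z_trunc_bounds: "1 \<le> k \<Longrightarrow> \<omega> \<in> space M \<Longrightarrow> 0 \<le> Z_trunc k \<omega> \<and> Z_trunc k \<omega> \<le> real k"
  unfolding Z_trunc_def using Z_nonneg[of k \<omega>] by auto

lemma integrable_Z_trunc: "1 \<le> k \<Longrightarrow> integrable M (Z_trunc k)"
  by (rule integrable_const_bound[where B="real k"]) (use Z_trunc_bounds measurable_Z_trunc in auto)

lemma integrable_Z_trunc_mult: "1 \<le> k \<Longrightarrow> 1 \<le> j \<Longrightarrow> integrable M (\<lambda>\<omega>. Z_trunc k \<omega> * Z_trunc j \<omega>)"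
  by (rule integrable_mult_bounded[where K="real k" and L="real j"])
     (use Z_trunc_bounds measurable_Z_trunc in auto)

lemma integrable_Z: "1 \<le> k \<Longrightarrow> integrable M (Z k)"
  and mean_le: "1 \<le> k \<Longrightarrow> mean k \<le> C * expectation (\<lambda>\<omega>. \<bar>Y \<omega>\<bar>)"
  using tail_dominated_integrable_le[of "Z k" "\<lambda>\<omega>. \<bar>Y \<omega>\<bar>" C] measurable_Z[of k] Z_nonneg[of k]
    C_nonneg tail_le[of k] integrable_Y
  by (auto simp: mean_def)

lemma mean_trunc_bounds: "1 \<le> k \<Longrightarrow> 0 \<le> mean_trunc k \<and> mean_trunc k \<le> mean k"
  unfolding mean_trunc_def mean_def using integrable_Z_trunc[of k] integrable_Z[of k] Z_trunc_bounds[of k]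
  by (auto simp: Z_trunc_def intro!: integral_nonneg_AE integral_mono)

lemma mean_minus_mean_trunc_le:
  assumes "1 \<le> k"
  shows "mean k - mean_trunc k \<le> C * expectation (\<lambda>\<omega>. max (\<bar>Y \<omega>\<bar> - real k) 0)"
proof -
  have [measurable]: "Z k \<in> borel_measurable M" using measurable_Z \<open>1 \<le> k\<close> by simp
  have "mean k - mean_trunc k = expectation (\<lambda>\<omega>. Z k \<omega> - Z_trunc k \<omega>)"
    unfolding mean_def mean_trunc_def using integrable_Z[OF assms] integrable_Z_trunc[OF assms] by simp
  also have "\<dots> = expectation (\<lambda>\<omega>. max (Z k \<omega> - real k) 0)"
    by (rule Bochner_Integration.integral_cong) (auto simp: Z_trunc_def)
  also have "\<dots> \<le> C * expectation (\<lambda>\<omega>. max (\<bar>Y \<omega>\<bar> - real k) 0)"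
  proof (rule tail_dominated_integrable_le(2)[OF _ _ _ _ C_nonneg])
    show "prob {\<omega>\<in>space M. s < max (Z k \<omega> - real k) 0} \<le> C * prob {\<omega>\<in>space M. s < max (\<bar>Y \<omega>\<bar> - real k) 0}"
      if "0 < s" for s
    proof -
      have "{\<omega>\<in>space M. s < max (Z k \<omega> - real k) 0} = {\<omega>\<in>space M. real k + s < Z k \<omega>}"
        "{\<omega>\<in>space M. s < max (\<bar>Y \<omega>\<bar> - real k) 0} = {\<omega>\<in>space M. real k + s < \<bar>Y \<omega>\<bar>}"
        using that by auto
      then show ?thesis
        using tail_le[OF assms, of "real k + s"] that by simp
    qed
    show "integrable M (\<lambda>\<omega>. max (\<bar>Y \<omega>\<bar> - real k) 0)"
      by (rule Bochner_Integration.integrable_bound[OF integrable_abs[OF integrable_Y]]) auto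
  qed auto
  finally show ?thesis .
qed

lemma expectation_Z_trunc_sq_le:
  assumes "1 \<le> k" "k \<le> n"
  shows "expectation (\<lambda>\<omega>. (Z_trunc k \<omega>)\<^sup>2) \<le> C * expectation (\<lambda>\<omega>. (min \<bar>Y \<omega>\<bar> (real n))\<^sup>2)"
proof -
  have [measurable]: "Z k \<in> borel_measurable M" using measurable_Z \<open>1 \<le> k\<close> by simp
  have "expectation (\<lambda>\<omega>. (Z_trunc k \<omega>)\<^sup>2) \<le> expectation (\<lambda>\<omega>. (min (Z k \<omega>) (real n))\<^sup>2)"
  proof (rule integral_mono)
    show "integrable M (\<lambda>\<omega>. (Z_trunc k \<omega>)\<^sup>2)"
      using integrable_Z_trunc_mult[OF assms(1) assms(1)] by (simp add: power2_eq_square)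
    show "integrable M (\<lambda>\<omega>. (min (Z k \<omega>) (real n))\<^sup>2)"
      by (rule integrable_const_bound[where B="(real n)\<^sup>2"])
         (use Z_nonneg[OF assms(1)] in \<open>auto intro!: power_mono\<close>)
    show "(Z_trunc k \<omega>)\<^sup>2 \<le> (min (Z k \<omega>) (real n))\<^sup>2" if "\<omega> \<in> space M" for \<omega>
      using Z_nonneg[OF assms(1) that] assms unfolding Z_trunc_def by (intro power_mono) auto
  qed
  also have "\<dots> \<le> C * expectation (\<lambda>\<omega>. (min \<bar>Y \<omega>\<bar> (real n))\<^sup>2)"
  proof (rule tail_dominated_integrable_le(2)[OF _ _ _ _ C_nonneg])
    show "prob {\<omega>\<in>space M. s < (min (Z k \<omega>) (real n))\<^sup>2}
        \<le> C * prob {\<omega>\<in>space M. s < (min \<bar>Y \<omega>\<bar> (real n))\<^sup>2}" if "0 < s" for s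
      by (rule prob_less_min_sq_le[OF tail_le[OF assms(1)] Z_nonneg[OF assms(1)] _ C_nonneg _ that]) auto
    show "integrable M (\<lambda>\<omega>. (min \<bar>Y \<omega>\<bar> (real n))\<^sup>2)"
      by (rule integrable_const_bound[where B="(real n)\<^sup>2"]) (auto simp: abs_le_square_iff)
  qed auto
  finally show ?thesis .
qed

lemma Cesaro_mean_minus_mean_trunc: "(\<lambda>n. (\<Sum>k=1..n. b k * (mean k - mean_trunc k)) / real n) \<longlonglongrightarrow> 0"
proof -
  define d where "d k = (if k = 0 then 0 else mean k - mean_trunc k)" for k
  have "(\<lambda>n. (\<Sum>k=1..n. b k * d k) / real n) \<longlonglongrightarrow> 0"
  proof (rule weighted_Cesaro_tendsto_zero[OF b_nonneg])
    show "0 \<le> d k" for k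
      unfolding d_def using mean_trunc_bounds[of k] by auto
    show "d k \<le> C * expectation (\<lambda>\<omega>. max (\<bar>Y \<omega>\<bar> - real k) 0)" for k
      using mean_minus_mean_trunc_le[of k] C_nonneg by (auto simp: d_def intro!: integral_nonneg_AE)
    show "(\<lambda>k. C * expectation (\<lambda>\<omega>. max (\<bar>Y \<omega>\<bar> - real k) 0)) \<longlonglongrightarrow> 0"
      using tendsto_mult_right_zero[OF tendsto_expectation_excess[OF integrable_Y]] by simp
    have "b k \<le> 1 + (b k)\<^sup>2" for k
      using zero_le_power2[of "b k - 1"] b_nonneg[of k] by (simp add: power2_eq_square algebra_simps)
    then show "(\<Sum>k=1..n. b k) \<le> (1 + B) * real n" for n
      using sum_mono[of "{1..n}" b "\<lambda>k. 1 + (b k)\<^sup>2"] sum_b_sq_le[of n]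
      by (simp add: sum.distrib algebra_simps)
  qed
  moreover have "(\<Sum>k=1..n. b k * d k) = (\<Sum>k=1..n. b k * (mean k - mean_trunc k))" for n
    by (rule sum.cong) (auto simp: d_def)
  ultimately show ?thesis by simp
qed

text \<open>By Borel--Cantelli, almost surely \<open>Z k = Z_trunc k\<close> for all large \<open>k\<close>, since
  \<open>\<Sum>\<^sub>k P(Z k > k) \<le> C \<Sum>\<^sub>k P(|Y| > k) < \<infinity>\<close>.\<close>

lemma AE_Cesaro_Z_minus_Z_trunc:
  "AE \<omega> in M. (\<lambda>n. (\<Sum>k=1..n. b k * (Z k \<omega> - Z_trunc k \<omega>)) / real n) \<longlonglongrightarrow> 0"
proof -
  define A where "A k = (if k = 0 then {} else {\<omega>\<in>space M. real k < Z k \<omega>})" for k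
  have [measurable]: "A k \<in> events" for k
    unfolding A_def using measurable_Z[of k] by auto
  have "summable (\<lambda>k. C * prob {\<omega>\<in>space M. real k < \<bar>Y \<omega>\<bar>})"
    by (intro summable_mult summable_prob_abs_greater measurable_Y integrable_Y)
  moreover have "norm (prob (A k)) \<le> C * prob {\<omega>\<in>space M. real k < \<bar>Y \<omega>\<bar>}" for k
    unfolding A_def using tail_le[of k "real k"] C_nonneg by auto
  ultimately have "summable (\<lambda>k. prob (A k))"
    by (rule summable_comparison_test')
  then have "AE \<omega> in M. eventually (\<lambda>k. \<omega> \<in> space M - A k) sequentially"
    by (intro borel_cantelli_AE1) (auto simp: emeasure_eq_measure)
  then show ?thesis
  proof (rule AE_mp[OF _ AE_I2], intro impI Cesaro_tendsto_zero_of_eventually_zero)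
    fix \<omega> assume "\<omega> \<in> space M" and "eventually (\<lambda>k. \<omega> \<in> space M - A k) sequentially"
    then show "eventually (\<lambda>k. b k * (Z k \<omega> - Z_trunc k \<omega>) = 0) sequentially"
      by (auto elim!: eventually_mono[OF eventually_conj[OF _ eventually_ge_at_top[of 1]]]
               simp: A_def Z_trunc_def split: if_splits)
  qed
qed

lemma measurable_S_trunc[measurable]: "S_trunc n \<in> borel_measurable M"
  unfolding S_trunc_def using measurable_Z_trunc by measurable

lemma integrable_centered_Z_trunc_mult:
  assumes "1 \<le> k" "1 \<le> j"
  shows "integrable M (\<lambda>\<omega>. (Z_trunc k \<omega> - mean_trunc k) * (Z_trunc j \<omega> - mean_trunc j))"
proof -
  have measurable: "(\<lambda>\<omega>. Z_trunc i \<omega> - mean_trunc i) \<in> borel_measurable M" if "1 \<le> i" for i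
    using measurable_Z_trunc[OF that] by simp
  have bound: "\<bar>Z_trunc i \<omega> - mean_trunc i\<bar> \<le> real i + \<bar>mean_trunc i\<bar>" if "1 \<le> i" "\<omega> \<in> space M" for i \<omega>
    using Z_trunc_bounds[OF that] by linarith
  show ?thesis
    by (rule integrable_mult_bounded[OF measurable[OF assms(1)] measurable[OF assms(2)]
          bound[OF assms(1)] bound[OF assms(2)]])
qed

lemma expectation_centered_Z_trunc_mult:
  assumes "1 \<le> k" "1 \<le> j"
  shows "expectation (\<lambda>\<omega>. (Z_trunc k \<omega> - mean_trunc k) * (Z_trunc j \<omega> - mean_trunc j))
           = covariance M (Z_trunc k) (Z_trunc j)"
proof -
  have "(\<lambda>\<omega>. (Z_trunc k \<omega> - mean_trunc k) * (Z_trunc j \<omega> - mean_trunc j)) =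
      (\<lambda>\<omega>. Z_trunc k \<omega> * Z_trunc j \<omega> - mean_trunc j * Z_trunc k \<omega> - mean_trunc k * Z_trunc j \<omega>
            + mean_trunc k * mean_trunc j)"
    by (auto simp: fun_eq_iff algebra_simps)
  then show ?thesis
    using integrable_Z_trunc_mult[OF assms] integrable_Z_trunc[OF assms(1)] integrable_Z_trunc[OF assms(2)]
    by (simp add: covariance_def mean_trunc_def prob_space)
qed

lemma S_trunc_sq:
  "(S_trunc n \<omega>)\<^sup>2 = (\<Sum>k=1..n. \<Sum>j=1..n.
      b k * b j * ((Z_trunc k \<omega> - mean_trunc k) * (Z_trunc j \<omega> - mean_trunc j)))"
  unfolding S_trunc_def power2_eq_square sum_product by (simp add: ac_simps)

lemma integrable_S_trunc_sq: "integrable M (\<lambda>\<omega>. (S_trunc n \<omega>)\<^sup>2)"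
  unfolding S_trunc_sq by (auto intro!: Bochner_Integration.integrable_sum integrable_centered_Z_trunc_mult)

lemma expectation_S_trunc_sq:
  "expectation (\<lambda>\<omega>. (S_trunc n \<omega>)\<^sup>2) = (\<Sum>k=1..n. \<Sum>j=1..n. b k * b j * covariance M (Z_trunc k) (Z_trunc j))"
proof -
  have "expectation (\<lambda>\<omega>. (S_trunc n \<omega>)\<^sup>2) = (\<Sum>k=1..n. expectation (\<lambda>\<omega>. \<Sum>j=1..n.
      b k * b j * ((Z_trunc k \<omega> - mean_trunc k) * (Z_trunc j \<omega> - mean_trunc j))))"
    unfolding S_trunc_sq
    by (rule Bochner_Integration.integral_sum)
       (auto intro!: Bochner_Integration.integrable_sum integrable_centered_Z_trunc_mult)
  also have "\<dots> = (\<Sum>k=1..n. \<Sum>j=1..n. b k * b j * covariance M (Z_trunc k) (Z_trunc j))"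
  proof (rule sum.cong[OF refl])
    fix k assume "k \<in> {1..n}"
    then have "expectation (\<lambda>\<omega>. \<Sum>j=1..n. b k * b j * ((Z_trunc k \<omega> - mean_trunc k) * (Z_trunc j \<omega> - mean_trunc j)))
        = (\<Sum>j=1..n. expectation (\<lambda>\<omega>. b k * b j * ((Z_trunc k \<omega> - mean_trunc k) * (Z_trunc j \<omega> - mean_trunc j))))"
      by (intro Bochner_Integration.integral_sum) (auto intro!: integrable_centered_Z_trunc_mult)
    also have "\<dots> = (\<Sum>j=1..n. b k * b j * covariance M (Z_trunc k) (Z_trunc j))"
      using \<open>k \<in> {1..n}\<close> by (intro sum.cong) (auto simp: expectation_centered_Z_trunc_mult)
    finally show "expectation (\<lambda>\<omega>. \<Sum>j=1..n. b k * b j * ((Z_trunc k \<omega> - mean_trunc k) * (Z_trunc j \<omega> - mean_trunc j)))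
        = (\<Sum>j=1..n. b k * b j * covariance M (Z_trunc k) (Z_trunc j))" .
  qed
  finally show ?thesis .
qed

lemma expectation_S_trunc_sq_le:
  "expectation (\<lambda>\<omega>. (S_trunc n \<omega>)\<^sup>2)
     \<le> B * real n * (C * expectation (\<lambda>\<omega>. (min \<bar>Y \<omega>\<bar> (real n))\<^sup>2)) + 2 * (\<Sum>j=1..n. H_row j)"
proof -
  let ?E = "C * expectation (\<lambda>\<omega>. (min \<bar>Y \<omega>\<bar> (real n))\<^sup>2)"
  have "expectation (\<lambda>\<omega>. (S_trunc n \<omega>)\<^sup>2) =
      (\<Sum>k=1..n. b k * b k * covariance M (Z_trunc k) (Z_trunc k)) +
      2 * (\<Sum>j=1..n. \<Sum>k=1..<j. b k * b j * covariance M (Z_trunc k) (Z_trunc j))"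
    unfolding expectation_S_trunc_sq
    by (rule double_sum_symmetric) (simp add: covariance_commute mult.commute)
  also have "(\<Sum>k=1..n. b k * b k * covariance M (Z_trunc k) (Z_trunc k)) \<le> (\<Sum>k=1..n. (b k)\<^sup>2 * ?E)"
  proof (rule sum_mono)
    fix k assume "k \<in> {1..n}"
    have "covariance M (Z_trunc k) (Z_trunc k) \<le> expectation (\<lambda>\<omega>. (Z_trunc k \<omega>)\<^sup>2)"
      by (simp add: covariance_def power2_eq_square)
    then have "covariance M (Z_trunc k) (Z_trunc k) \<le> ?E"
      using expectation_Z_trunc_sq_le[of k n] \<open>k \<in> {1..n}\<close> by simp
    then show "b k * b k * covariance M (Z_trunc k) (Z_trunc k) \<le> (b k)\<^sup>2 * ?E"
      by (simp add: power2_eq_square mult_left_mono)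
  qed
  also have "\<dots> \<le> B * real n * ?E"
    unfolding sum_distrib_right[symmetric]
    using sum_b_sq_le[of n] C_nonneg by (intro mult_right_mono) (auto intro: integral_nonneg_AE)
  also have "(\<Sum>j=1..n. \<Sum>k=1..<j. b k * b j * covariance M (Z_trunc k) (Z_trunc j)) \<le> (\<Sum>j=1..n. H_row j)"
    unfolding H_row_def
  proof (intro sum_mono)
    fix j k assume "j \<in> {1..n}" "k \<in> {1..<j}"
    then show "b k * b j * covariance M (Z_trunc k) (Z_trunc j) \<le> b k * b j * H k j"
      using covariance_le[of k j] b_nonneg[of k] b_nonneg[of j]
      by (intro mult_left_mono) (auto simp: Z_trunc_def[abs_def])
  qed
  finally show ?thesis by simp
qed

lemma prob_S_trunc_ge_le:
  assumes "0 < \<epsilon>" "1 \<le> n"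
  shows "prob {\<omega>\<in>space M. \<epsilon> * real n \<le> \<bar>S_trunc n \<omega>\<bar>}
    \<le> (B * C * (expectation (\<lambda>\<omega>. (min \<bar>Y \<omega>\<bar> (real n))\<^sup>2) / real n) + 2 * ((\<Sum>j=1..n. H_row j) / (real n)\<^sup>2)) / \<epsilon>\<^sup>2"
proof -
  have "prob {\<omega>\<in>space M. \<epsilon> * real n \<le> \<bar>S_trunc n \<omega>\<bar>} \<le> expectation (\<lambda>\<omega>. (S_trunc n \<omega>)\<^sup>2) / (\<epsilon> * real n)\<^sup>2"
    using assms by (intro second_moment_method integrable_S_trunc_sq) auto
  also have "\<dots> \<le> (B * real n * (C * expectation (\<lambda>\<omega>. (min \<bar>Y \<omega>\<bar> (real n))\<^sup>2)) + 2 * (\<Sum>j=1..n. H_row j))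
                  / (\<epsilon> * real n)\<^sup>2"
    by (intro divide_right_mono expectation_S_trunc_sq_le) simp
  also have "\<dots> = (B * C * (expectation (\<lambda>\<omega>. (min \<bar>Y \<omega>\<bar> (real n))\<^sup>2) / real n)
                  + 2 * ((\<Sum>j=1..n. H_row j) / (real n)\<^sup>2)) / \<epsilon>\<^sup>2"
    using assms by (simp add: field_simps power2_eq_square)
  finally show ?thesis .
qed

lemma summable_prob_S_trunc_geom_index:
  assumes "1 < \<alpha>" "0 < \<epsilon>"
  shows "summable (\<lambda>m. prob {\<omega>\<in>space M. \<epsilon> * real (geom_index \<alpha> m) \<le> \<bar>S_trunc (geom_index \<alpha> m) \<omega>\<bar>})"
proof -
  let ?n = "\<lambda>m. real (geom_index \<alpha> m)"
  let ?u = "\<lambda>m. expectation (\<lambda>\<omega>. (min \<bar>Y \<omega>\<bar> (?n m))\<^sup>2) / ?n m"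
  let ?v = "\<lambda>m. (\<Sum>j=1..geom_index \<alpha> m. H_row j) / (?n m)\<^sup>2"
  have prob_le: "prob {\<omega>\<in>space M. \<epsilon> * ?n m \<le> \<bar>S_trunc (geom_index \<alpha> m) \<omega>\<bar>} \<le> (B * C * ?u m + 2 * ?v m) / \<epsilon>\<^sup>2" for m
    using geom_index_bounds(1)[of \<alpha> m] assms by (intro prob_S_trunc_ge_le) auto
  have sum_le: "(\<Sum>m<N. (B * C * ?u m + 2 * ?v m) / \<epsilon>\<^sup>2)
      \<le> (B * C * (4 * \<alpha> / (\<alpha> - 1) * expectation (\<lambda>\<omega>. \<bar>Y \<omega>\<bar>)) + 2 * (4 * \<alpha>\<^sup>2 / (\<alpha>\<^sup>2 - 1) * K)) / \<epsilon>\<^sup>2" for N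
  proof -
    have sums: "(\<Sum>m<N. (B * C * ?u m + 2 * ?v m) / \<epsilon>\<^sup>2) = (B * C * (\<Sum>m<N. ?u m) + 2 * (\<Sum>m<N. ?v m)) / \<epsilon>\<^sup>2"
      by (simp only: sum_divide_distrib[symmetric] sum.distrib sum_distrib_left[symmetric])
    have u: "B * C * (\<Sum>m<N. ?u m) \<le> B * C * (4 * \<alpha> / (\<alpha> - 1) * expectation (\<lambda>\<omega>. \<bar>Y \<omega>\<bar>))"
      using sum_expectation_min_sq_div_geom_index_le[OF measurable_Y integrable_Y assms(1)] B_nonneg C_nonneg
      by (intro mult_left_mono) auto
    have v: "(\<Sum>m<N. ?v m) \<le> 4 * \<alpha>\<^sup>2 / (\<alpha>\<^sup>2 - 1) * K"
      using sum_H_le H_nonneg b_nonneg unfolding H_row_def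
      by (intro sum_partial_sum_div_geom_index_sq_le[OF assms(1)])
         (auto intro!: sum_nonneg simp: sum_divide_distrib)
    show ?thesis
      unfolding sums by (rule divide_right_mono[OF add_mono[OF u]]) (use v in auto)
  qed
  show ?thesis
  proof (rule summableI_nonneg_bounded)
    have "(\<Sum>m<N. prob {\<omega>\<in>space M. \<epsilon> * ?n m \<le> \<bar>S_trunc (geom_index \<alpha> m) \<omega>\<bar>})
        \<le> (\<Sum>m<N. (B * C * ?u m + 2 * ?v m) / \<epsilon>\<^sup>2)" for N
      by (rule sum_mono) (rule prob_le)
    then show "(\<Sum>m<N. prob {\<omega>\<in>space M. \<epsilon> * ?n m \<le> \<bar>S_trunc (geom_index \<alpha> m) \<omega>\<bar>})
        \<le> (B * C * (4 * \<alpha> / (\<alpha> - 1) * expectation (\<lambda>\<omega>. \<bar>Y \<omega>\<bar>)) + 2 * (4 * \<alpha>\<^sup>2 / (\<alpha>\<^sup>2 - 1) * K)) / \<epsilon>\<^sup>2" for N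
      using sum_le[of N] by (rule order_trans)
  qed simp
qed

lemma AE_S_trunc_geom_index_tendsto:
  assumes "1 < \<alpha>"
  shows "AE \<omega> in M. (\<lambda>m. S_trunc (geom_index \<alpha> m) \<omega> / real (geom_index \<alpha> m)) \<longlonglongrightarrow> 0"
proof (rule AE_tendsto_zero_of_AE_eventually_less)
  fix \<epsilon> :: real assume "0 < \<epsilon>"
  define A where "A m = {\<omega>\<in>space M. \<epsilon> * real (geom_index \<alpha> m) \<le> \<bar>S_trunc (geom_index \<alpha> m) \<omega>\<bar>}" for m
  have "AE \<omega> in M. eventually (\<lambda>m. \<omega> \<in> space M - A m) sequentially"
    using summable_prob_S_trunc_geom_index[OF assms \<open>0 < \<epsilon>\<close>] unfolding A_def
    by (intro borel_cantelli_AE1) (auto simp: emeasure_eq_measure)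
  then show "AE \<omega> in M. eventually (\<lambda>m. \<bar>S_trunc (geom_index \<alpha> m) \<omega>\<bar> < \<epsilon> * real (geom_index \<alpha> m)) sequentially"
  proof (rule AE_mp[OF _ AE_I2], intro impI)
    fix \<omega> assume "\<omega> \<in> space M" "eventually (\<lambda>m. \<omega> \<in> space M - A m) sequentially"
    then show "eventually (\<lambda>m. \<bar>S_trunc (geom_index \<alpha> m) \<omega>\<bar> < \<epsilon> * real (geom_index \<alpha> m)) sequentially"
      by (auto elim!: eventually_mono simp: A_def not_le)
  qed
next
  show "0 < real (geom_index \<alpha> m)" for m
    using geom_index_bounds(1)[of \<alpha> m] assms by simp
qed

lemma AE_S_trunc_tendsto: "AE \<omega> in M. (\<lambda>n. S_trunc n \<omega> / real n) \<longlonglongrightarrow> 0"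
proof -
  have "AE \<omega> in M. \<forall>p::nat. (\<lambda>m. S_trunc (geom_index (1 + 1 / (real (Suc p))\<^sup>2) m) \<omega>
                                / real (geom_index (1 + 1 / (real (Suc p))\<^sup>2) m)) \<longlonglongrightarrow> 0"
    unfolding AE_all_countable by (intro allI AE_S_trunc_geom_index_tendsto) simp
  then show ?thesis
  proof (rule AE_mp[OF _ AE_I2], intro impI)
    fix \<omega> assume "\<omega> \<in> space M" and subsequences: "\<forall>p::nat. (\<lambda>m. S_trunc (geom_index (1 + 1 / (real (Suc p))\<^sup>2) m) \<omega>
                                / real (geom_index (1 + 1 / (real (Suc p))\<^sup>2) m)) \<longlonglongrightarrow> 0"
    have S_trunc_eq: "S_trunc n \<omega> = (\<Sum>k=1..n. b k * Z_trunc k \<omega>) - (\<Sum>k=1..n. b k * mean_trunc k)" for n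
      unfolding S_trunc_def by (simp add: sum_subtractf[symmetric] right_diff_distrib)
    have "mono (\<lambda>n. \<Sum>k=1..n. b k * Z_trunc k \<omega>)"
      by (intro monoI sum_mono2) (use Z_trunc_bounds[OF _ \<open>\<omega> \<in> space M\<close>] b_nonneg in auto)
    moreover have "0 \<le> mean_trunc k \<and> mean_trunc k \<le> C * expectation (\<lambda>\<omega>. \<bar>Y \<omega>\<bar>)" if "1 \<le> k" for k
      using mean_trunc_bounds[OF that] mean_le[OF that] by simp
    ultimately show "(\<lambda>n. S_trunc n \<omega> / real n) \<longlonglongrightarrow> 0"
      using Cesaro_tendsto_zero_of_geom_index_subsequences[OF _ b_nonneg _ sum_b_sq_le B_nonneg]
        subsequences unfolding S_trunc_eq by blast
  qed
qed

theorem slln: "AE \<omega> in M. (\<lambda>n. (\<Sum>k=1..n. b k * (Z k \<omega> - mean k)) / real n) \<longlonglongrightarrow> 0"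
  using AE_Cesaro_Z_minus_Z_trunc AE_S_trunc_tendsto
proof eventually_elim
  case (elim \<omega>)
  have "(\<Sum>k=1..n. b k * (Z k \<omega> - mean k)) / real n =
     (\<Sum>k=1..n. b k * (Z k \<omega> - Z_trunc k \<omega>)) / real n + S_trunc n \<omega> / real n
       - (\<Sum>k=1..n. b k * (mean k - mean_trunc k)) / real n" for n
    unfolding S_trunc_def diff_divide_distrib[symmetric] add_divide_distrib[symmetric]
      sum_subtractf[symmetric] sum.distrib[symmetric]
    by (simp add: algebra_simps)
  moreover have "(\<lambda>n. (\<Sum>k=1..n. b k * (Z k \<omega> - Z_trunc k \<omega>)) / real n + S_trunc n \<omega> / real n
       - (\<Sum>k=1..n. b k * (mean k - mean_trunc k)) / real n) \<longlonglongrightarrow> 0 + 0 - 0"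
    by (intro tendsto_intros elim Cesaro_mean_minus_mean_trunc)
  ultimately show ?case by simp
qed

end

section \<open>Reduction to nonnegative summands\<close>

lemma sum_lower_triangle_le_infsum:
  fixes f :: "nat \<times> nat \<Rightarrow> real"
  assumes "f summable_on {(k, j). 1 \<le> k \<and> k < j}" and "\<And>k j. 1 \<le> k \<Longrightarrow> k < j \<Longrightarrow> 0 \<le> f (k, j)"
  shows "(\<Sum>j=1..n. \<Sum>k=1..<j. f (k, j)) \<le> infsum f {(k, j). 1 \<le> k \<and> k < j}"
proof -
  define P where "P = prod.swap ` (SIGMA j:{1..n}. {1..<j})"
  have "(\<Sum>j=1..n. \<Sum>k=1..<j. f (k, j)) = (\<Sum>(j, k)\<in>(SIGMA j:{1..n}. {1..<j}). f (k, j))"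
    by (rule sum.Sigma) auto
  also have "\<dots> = sum f P"
    unfolding P_def by (subst sum.reindex) (auto simp: case_prod_beta prod.swap_def)
  also have "\<dots> \<le> infsum f {(k, j). 1 \<le> k \<and> k < j}"
    by (rule finite_sum_le_infsum) (use assms in \<open>auto simp: P_def\<close>)
  finally show ?thesis .
qed

lemma sum_sq_le_of_abs_le:
  fixes a b :: "nat \<Rightarrow> real"
  assumes "\<And>k. 0 \<le> b k" "\<And>k. b k \<le> \<bar>a k\<bar>"
  shows "(\<Sum>k\<in>A. (b k)\<^sup>2) \<le> (\<Sum>k\<in>A. (a k)\<^sup>2)"
proof (rule sum_mono)
  fix k
  show "(b k)\<^sup>2 \<le> (a k)\<^sup>2"
    using abs_le_square_iff[of "b k" "a k"] assms[of k] by simp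
qed

lemma mult_diff_eq_pos_neg_parts:
  fixes a x p q :: real
  shows "a * (x - (p - q)) =
    max a 0 * (max (1 * x) 0 - p) - max a 0 * (max (-1 * x) 0 - q)
    - max (- a) 0 * (max (1 * x) 0 - p) + max (- a) 0 * (max (-1 * x) 0 - q)"
  by (auto simp: max_def algebra_simps)

context prob_space
begin

lemma expectation_eq_pos_part_minus_neg_part:
  fixes X :: "'a \<Rightarrow> real"
  assumes "integrable M X"
  shows "expectation X = expectation (\<lambda>\<omega>. max (1 * X \<omega>) 0) - expectation (\<lambda>\<omega>. max (-1 * X \<omega>) 0)"
proof -
  have "(\<lambda>\<omega>. max (X \<omega>) 0 - max (- X \<omega>) 0) = X"
    by (auto simp: fun_eq_iff)
  moreover have "expectation (\<lambda>\<omega>. max (X \<omega>) 0 - max (- X \<omega>) 0) =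
      expectation (\<lambda>\<omega>. max (X \<omega>) 0) - expectation (\<lambda>\<omega>. max (- X \<omega>) 0)"
    using assms by (intro Bochner_Integration.integral_diff integrable_max) auto
  ultimately show ?thesis
    by simp
qed

lemma prob_pos_part_greater_le:
  fixes X :: "'a \<Rightarrow> real"
  assumes [measurable]: "X \<in> borel_measurable M" and "\<sigma> = 1 \<or> \<sigma> = -1" "0 < s"
  shows "prob {\<omega>\<in>space M. s < max (\<sigma> * X \<omega>) 0} \<le> prob {\<omega>\<in>space M. s < \<bar>X \<omega>\<bar>}"
  by (rule finite_measure_mono) (use assms in auto)

lemma integrable_tail_dominated:
  fixes X Y :: "'a \<Rightarrow> real"
  assumes [measurable]: "X \<in> borel_measurable M" "Y \<in> borel_measurable M" and "integrable M Y" "0 \<le> C"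
    and "\<And>t. 0 < t \<Longrightarrow> prob {\<omega>\<in>space M. t < \<bar>X \<omega>\<bar>} \<le> C * prob {\<omega>\<in>space M. t < \<bar>Y \<omega>\<bar>}"
  shows "integrable M X"
  using tail_dominated_integrable_le(1)[of "\<lambda>\<omega>. \<bar>X \<omega>\<bar>" "\<lambda>\<omega>. \<bar>Y \<omega>\<bar>" C] assms
  by (simp add: integrable_abs_iff)

lemma covariance_trunc_part_le_Gcov:
  fixes X1 X2 :: "'a \<Rightarrow> real"
  assumes "PQD M X1 X2" "X1 \<in> borel_measurable M" "X2 \<in> borel_measurable M"
    and "\<sigma> = 1 \<or> \<sigma> = -1" "0 \<le> k" "k \<le> t"
  shows "covariance M (\<lambda>\<omega>. min (max (\<sigma> * X1 \<omega>) 0) k) (\<lambda>\<omega>. min (max (\<sigma> * X2 \<omega>) 0) t)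
           \<le> Gcov M X1 X2 t"
proof (cases "\<sigma> = 1")
  case True
  have "min (max (\<sigma> * x) 0) s = clip 0 s x" if "0 \<le> s" for x s
    using that True unfolding clip_def by auto
  then show ?thesis
    using covariance_clip_nonneg_le_Gcov[OF assms(1-3,5,6)] assms(5,6) by simp
next
  case False
  with assms(4) have "min (max (\<sigma> * x) 0) s = - clip (-s) 0 x" if "0 \<le> s" for x s
    using that unfolding clip_def by auto
  then show ?thesis
    using covariance_clip_nonpos_le_Gcov[OF assms(1-3,5,6)] assms(5,6) by (simp add: covariance_uminus)
qed

lemma sum_Gcov_div_sq_le_infsum:
  fixes X :: "nat \<Rightarrow> 'a \<Rightarrow> real" and a b :: "nat \<Rightarrow> real"
  assumes X: "\<And>n. 1 \<le> n \<Longrightarrow> X n \<in> borel_measurable M" "\<And>n. 1 \<le> n \<Longrightarrow> integrable M (X n)"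
    and PQD: "pairwise_PQD M X"
    and summable: "(\<lambda>(k, j). \<bar>a k * a j\<bar> * (LBINT t:{real j..}. Gcov M (X k) (X j) t / t ^ 3))
           summable_on {(k, j). 1 \<le> k \<and> k < j}"
    and b: "\<And>k. 0 \<le> b k" "\<And>k. b k \<le> \<bar>a k\<bar>"
  shows "(\<Sum>j=1..n. \<Sum>k=1..<j. b k * b j * Gcov M (X k) (X j) (real j) / (real j)\<^sup>2)
     \<le> 8 * infsum (\<lambda>(k, j). \<bar>a k * a j\<bar> * (LBINT t:{real j..}. Gcov M (X k) (X j) t / t ^ 3))
                   {(k, j). 1 \<le> k \<and> k < j}"
proof -
  let ?f = "\<lambda>(k, j). \<bar>a k * a j\<bar> * (LBINT t:{real j..}. Gcov M (X k) (X j) t / t ^ 3)"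
  have term_le: "b k * b j * Gcov M (X k) (X j) (real j) / (real j)\<^sup>2 \<le> 8 * ?f (k, j)"
    and nonneg: "0 \<le> ?f (k, j)" if "1 \<le> k" "k < j" for k j
  proof -
    let ?I = "LBINT t:{real j..}. Gcov M (X k) (X j) t / t ^ 3"
    have "PQD M (X k) (X j)" using pairwise_PQD_imp_PQD[OF PQD] that by simp
    then have G: "0 \<le> Gcov M (X k) (X j) (real j)" "Gcov M (X k) (X j) (real j) / (real j)\<^sup>2 \<le> 8 * ?I"
      using Gcov_nonneg Gcov_div_sq_le_tail_integral X that by auto
    have "b k * b j * (Gcov M (X k) (X j) (real j) / (real j)\<^sup>2) \<le> \<bar>a k * a j\<bar> * (8 * ?I)"
      using G b by (intro mult_mono) (auto simp: abs_mult intro: mult_mono)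
    then show "b k * b j * Gcov M (X k) (X j) (real j) / (real j)\<^sup>2 \<le> 8 * ?f (k, j)"
      by simp
    have "0 \<le> ?I"
      using G(2) divide_nonneg_nonneg[OF G(1) zero_le_power2[of "real j"]] by linarith
    then show "0 \<le> ?f (k, j)"
      by simp
  qed
  have "(\<Sum>j=1..n. \<Sum>k=1..<j. b k * b j * Gcov M (X k) (X j) (real j) / (real j)\<^sup>2)
      \<le> (\<Sum>j=1..n. \<Sum>k=1..<j. 8 * ?f (k, j))"
    by (intro sum_mono term_le) auto
  also have "\<dots> = 8 * (\<Sum>j=1..n. \<Sum>k=1..<j. ?f (k, j))"
    by (simp add: sum_distrib_left)
  also have "\<dots> \<le> 8 * infsum ?f {(k, j). 1 \<le> k \<and> k < j}"
    using sum_lower_triangle_le_infsum[OF summable nonneg] by simp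
  finally show ?thesis .
qed

lemma slln_pos_neg_part:
  fixes X :: "nat \<Rightarrow> 'a \<Rightarrow> real" and a b :: "nat \<Rightarrow> real" and Y :: "'a \<Rightarrow> real"
  assumes X: "\<And>n. 1 \<le> n \<Longrightarrow> X n \<in> borel_measurable M" and PQD: "pairwise_PQD M X"
    and Y: "Y \<in> borel_measurable M" "integrable M Y" and "0 \<le> C"
    and tail: "\<And>n t. 1 \<le> n \<Longrightarrow> 0 < t \<Longrightarrow>
                 prob {\<omega>\<in>space M. t < \<bar>X n \<omega>\<bar>} \<le> C * prob {\<omega>\<in>space M. t < \<bar>Y \<omega>\<bar>}"
    and sum_a_sq: "\<And>n. (\<Sum>k=1..n. (a k)\<^sup>2) \<le> B * real n"
    and summable: "(\<lambda>(k, j). \<bar>a k * a j\<bar> * (LBINT t:{real j..}. Gcov M (X k) (X j) t / t ^ 3))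
           summable_on {(k, j). 1 \<le> k \<and> k < j}"
    and b: "\<And>k. 0 \<le> b k" "\<And>k. b k \<le> \<bar>a k\<bar>" and \<sigma>: "\<sigma> = 1 \<or> \<sigma> = -1"
  shows "AE \<omega> in M. (\<lambda>n. (\<Sum>k=1..n. b k * (max (\<sigma> * X k \<omega>) 0 - expectation (\<lambda>\<omega>. max (\<sigma> * X k \<omega>) 0)))
                        / real n) \<longlonglongrightarrow> 0"
proof -
  have integrable_X: "integrable M (X n)" if "1 \<le> n" for n
    using integrable_tail_dominated[OF X[OF that] Y \<open>0 \<le> C\<close> tail[OF that]] .
  interpret weighted_slln_nonneg M "\<lambda>k \<omega>. max (\<sigma> * X k \<omega>) 0" b Y C B
    "8 * infsum (\<lambda>(k, j). \<bar>a k * a j\<bar> * (LBINT t:{real j..}. Gcov M (X k) (X j) t / t ^ 3))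
       {(k, j). 1 \<le> k \<and> k < j}"
    "\<lambda>k j. Gcov M (X k) (X j) (real j)"
  proof
    show "(\<lambda>\<omega>. max (\<sigma> * X k \<omega>) 0) \<in> borel_measurable M" if "1 \<le> k" for k
      using X[OF that] by measurable
    show "prob {\<omega>\<in>space M. s < max (\<sigma> * X k \<omega>) 0} \<le> C * prob {\<omega>\<in>space M. s < \<bar>Y \<omega>\<bar>}"
      if "1 \<le> k" "0 < s" for k s
      using prob_pos_part_greater_le[OF X[OF that(1)] \<sigma> that(2)] tail[OF that] by simp
    show "(\<Sum>k=1..n. (b k)\<^sup>2) \<le> B * real n" for n
      using order_trans[OF sum_sq_le_of_abs_le[of b a "{1..n}", OF b] sum_a_sq[of n]] .
    show "covariance M (\<lambda>\<omega>. min (max (\<sigma> * X k \<omega>) 0) (real k)) (\<lambda>\<omega>. min (max (\<sigma> * X j \<omega>) 0) (real j))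
        \<le> Gcov M (X k) (X j) (real j)" if "1 \<le> k" "k < j" for k j
      using covariance_trunc_part_le_Gcov[OF pairwise_PQD_imp_PQD[OF PQD] X X \<sigma>] that by simp
    show "0 \<le> Gcov M (X k) (X j) (real j)" if "1 \<le> k" "k < j" for k j
      using Gcov_nonneg[OF pairwise_PQD_imp_PQD[OF PQD] X X] that by simp
    show "(\<Sum>j=1..n. \<Sum>k=1..<j. b k * b j * Gcov M (X k) (X j) (real j) / (real j)\<^sup>2)
      \<le> 8 * infsum (\<lambda>(k, j). \<bar>a k * a j\<bar> * (LBINT t:{real j..}. Gcov M (X k) (X j) t / t ^ 3))
                   {(k, j). 1 \<le> k \<and> k < j}" for n
      by (rule sum_Gcov_div_sq_le_infsum[OF X integrable_X PQD summable b])
  qed (use Y \<open>0 \<le> C\<close> b in auto)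
  show ?thesis
    using slln unfolding mean_def .
qed

lemma weighted_slln_PQD:
  fixes X :: "nat \<Rightarrow> 'a \<Rightarrow> real" and a :: "nat \<Rightarrow> real" and Y :: "'a \<Rightarrow> real"
  assumes X: "\<And>n. 1 \<le> n \<Longrightarrow> X n \<in> borel_measurable M" and PQD: "pairwise_PQD M X"
    and Y: "Y \<in> borel_measurable M" "integrable M Y" and "0 \<le> C"
    and tail: "\<And>n t. 1 \<le> n \<Longrightarrow> 0 < t \<Longrightarrow>
                 prob {\<omega>\<in>space M. t < \<bar>X n \<omega>\<bar>} \<le> C * prob {\<omega>\<in>space M. t < \<bar>Y \<omega>\<bar>}"
    and sum_a_sq: "\<And>n. (\<Sum>k=1..n. (a k)\<^sup>2) \<le> B * real n"
    and summable: "(\<lambda>(k, j). \<bar>a k * a j\<bar> * (LBINT t:{real j..}. Gcov M (X k) (X j) t / t ^ 3))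
           summable_on {(k, j). 1 \<le> k \<and> k < j}"
  shows "AE \<omega> in M. (\<lambda>n. (\<Sum>k=1..n. a k * (X k \<omega> - expectation (X k))) / real n) \<longlonglongrightarrow> 0"
proof -
  define E where "E \<sigma> k = expectation (\<lambda>\<omega>. max (\<sigma> * X k \<omega>) 0)" for \<sigma> k
  define S where "S b \<sigma> n \<omega> = (\<Sum>k=1..n. b k * (max (\<sigma> * X k \<omega>) 0 - E \<sigma> k)) / real n"
    for b :: "nat \<Rightarrow> real" and \<sigma> :: real and n \<omega>
  have "AE \<omega> in M. (\<lambda>n. S b \<sigma> n \<omega>) \<longlonglongrightarrow> 0"
    if "b = (\<lambda>k. max (a k) 0) \<or> b = (\<lambda>k. max (- a k) 0)" "\<sigma> = 1 \<or> \<sigma> = -1" for b \<sigma>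
    unfolding S_def E_def using that
    by (intro slln_pos_neg_part[OF X PQD Y \<open>0 \<le> C\<close> tail sum_a_sq summable]) auto
  then have limits: "AE \<omega> in M. (\<lambda>n. S (\<lambda>k. max (a k) 0) 1 n \<omega>) \<longlonglongrightarrow> 0 \<and> (\<lambda>n. S (\<lambda>k. max (a k) 0) (-1) n \<omega>) \<longlonglongrightarrow> 0 \<and>
      (\<lambda>n. S (\<lambda>k. max (- a k) 0) 1 n \<omega>) \<longlonglongrightarrow> 0 \<and> (\<lambda>n. S (\<lambda>k. max (- a k) 0) (-1) n \<omega>) \<longlonglongrightarrow> 0"
    by (simp add: AE_conj_iff)
  have mean: "expectation (X k) = E 1 k - E (-1) k" if "1 \<le> k" for k
    unfolding E_def using integrable_tail_dominated[OF X[OF that] Y \<open>0 \<le> C\<close> tail[OF that]]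
    by (rule expectation_eq_pos_part_minus_neg_part)
  have decomposition: "(\<Sum>k=1..n. a k * (X k \<omega> - expectation (X k))) / real n =
      S (\<lambda>k. max (a k) 0) 1 n \<omega> - S (\<lambda>k. max (a k) 0) (-1) n \<omega>
      - S (\<lambda>k. max (- a k) 0) 1 n \<omega> + S (\<lambda>k. max (- a k) 0) (-1) n \<omega>" for n \<omega>
    unfolding S_def diff_divide_distrib[symmetric] add_divide_distrib[symmetric]
      sum_subtractf[symmetric] sum.distrib[symmetric]
    by (intro arg_cong[where f="\<lambda>x. x / real n"] sum.cong) (simp_all add: mean mult_diff_eq_pos_neg_parts)
  show ?thesis
    using limits
  proof eventually_elim
    case (elim \<omega>)
    then have "(\<lambda>n. S (\<lambda>k. max (a k) 0) 1 n \<omega> - S (\<lambda>k. max (a k) 0) (-1) n \<omega>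
        - S (\<lambda>k. max (- a k) 0) 1 n \<omega> + S (\<lambda>k. max (- a k) 0) (-1) n \<omega>) \<longlonglongrightarrow> 0 - 0 - 0 + 0"
      by (intro tendsto_intros) auto
    then show ?case
      unfolding decomposition by simp
  qed
qed

end

theorem theorem1:
  fixes M :: "'a measure" and X :: "nat \<Rightarrow> 'a \<Rightarrow> real" and Y :: "'a \<Rightarrow> real"
    and a :: "nat \<Rightarrow> real"
  assumes "prob_space M"
    and "\<And>n. 1 \<le> n \<Longrightarrow> X n \<in> borel_measurable M"
    and "pairwise_PQD M X"
    and "Y \<in> borel_measurable M"
    and "stoch_dominated M X Y"
    and "integrable M Y"
    and "bdd_above {(\<Sum>k=1..n. (a k)\<^sup>2) / real n | n. 1 \<le> n}"
    and "(\<lambda>(k, j). \<bar>a k * a j\<bar> * (LBINT t:{real j..}. Gcov M (X k) (X j) t / t ^ 3))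
           summable_on {(k, j). 1 \<le> k \<and> k < j}"
  shows "AE \<omega> in M. (\<lambda>n. (\<Sum>k=1..n. a k * (X k \<omega> - (\<integral>\<omega>'. X k \<omega>' \<partial>M))) / real n)
                        \<longlonglongrightarrow> 0"
proof -
  interpret prob_space M by fact
  obtain C where "0 < C" and tail: "\<And>n t. 1 \<le> n \<Longrightarrow> 0 < t \<Longrightarrow>
      prob {\<omega>\<in>space M. t < \<bar>X n \<omega>\<bar>} \<le> C * prob {\<omega>\<in>space M. t < \<bar>Y \<omega>\<bar>}"
    using assms(5) unfolding stoch_dominated_def by auto
  obtain B where B: "\<And>n. 1 \<le> n \<Longrightarrow> (\<Sum>k=1..n. (a k)\<^sup>2) / real n \<le> B"
    using assms(7) unfolding bdd_above_def by auto
  have "(\<Sum>k=1..n. (a k)\<^sup>2) \<le> B * real n" for n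
    using B[of n] by (cases "n = 0") (auto simp: divide_le_eq mult.commute)
  from weighted_slln_PQD[OF assms(2-4) assms(6) less_imp_le[OF \<open>0 < C\<close>] tail this assms(8)]
  show ?thesis by simp
qed

end
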